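(* Let $P$ be any multiprogram in which each process is a single-threaded program accessing read/write variables from a set $V$, and let $K=\{V_1,\dots,V_m\}$ be any partition of a subset of $V$. Let $L(K)=\{1,\dots,m\}$. Then each of the two transformations $\mathrm{SWFR}$ and $\mathrm{FWSR}$ (described in the context) correctly implements the partition consistency model $\mathrm{PC}(K)$ on the partial-order broadcast model $\mathrm{POB}(L(K))$; i.e., for every finite computation $\widehat C$ of the transformed multiprogram that satisfies $\mathrm{POB}(L(K))$ and in which every transformed operation has completed, the interpretation $C$ of $\widehat C$ satisfies $\mathrm{PC}(K)$.
   Context: Framework. A thread issues a sequence of operation invocations (its program order). A process is a finite collection of threads; a multiprogram is a finite collection of processes. A computation of a multiprogram is obtained by completing every invocation with an arbitrary response; it is thus one sequence of completed operations per thread. $O_C$ is the set of operations of computation $C$; $O_C|p$ is the set of operations of process $p$; $O_C|\mathrm{wrts}$ is the set of all write operations; $O_C|\mathrm{wrts}(S)$ is the set of writes to variables in $S$. Program order $\to_{\mathrm{prog}}$ is the union of the per-thread total orders. A memory consistency model is a predicate on computations. Validity: a sequence of reads/writes on a variable is valid if each read returns the value of the most recent preceding write to that variable in the sequence (or the initial value if none); a sequence of operations on several objects is valid if its restriction to each object is valid. For broadcast objects, a sequence of bcast/deliver operations is valid if no deliver precedes its corresponding bcast (the bcast need not appear in the sequence) and no particular deliver occurs more than once. For relations $R,T$ and a set $A$: $\mathrm{Extends}[A,R,T]$ means $\forall a_1,a_2\in A: a_1 T a_2 \Rightarrow a_1 R a_2$; $\mathrm{Agree}[A,R,T]$ means $\forall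 a_1,a_2\in A: a_1 R a_2 \Leftrightarrow a_1 T a_2$. Partition consistency: for a partition $K=\{V_1,\dots,V_m\}$ of a subset of the shared variables, $\mathrm{PC}(K)(C)$ holds iff there exist, for every process $p$, a valid total order $\to_{L_p}$ on $O_C|p\cup O_C|\mathrm{wrts}$ such that for all $p$, $\mathrm{Extends}[O_C|p\cup O_C|\mathrm{wrts},\to_{L_p},\to_{\mathrm{prog}}]$, and for all $p,q$ and $i\in[1,m]$, $\mathrm{Agree}[O_C|\mathrm{wrts}(V_i),\to_{L_p},\to_{L_q}]$. Partial-order broadcast model: processes are multithreaded; threads of the same process share local variables; distinct processes communicate via unique update objects with operations $\mathrm{bcast}(u,l)$ (broadcast update $u$ with label $l\in L\cup\{\bot\}$, $\bot$ meaning unlabeled) and $\mathrm{deliver}$ returning some $(u,l)$. Define $x\to_{\mathrm{delOrder}} y$ iff $x=\mathrm{deliver}(u_1,l_1)$, $y=\mathrm{deliver}(u_2,l_2)$ and $\mathrm{bcast}(u_1,l_1)\to_{\mathrm{prog}}\mathrm{bcast}(u_2,l_2)$. $O_C|\mathrm{delivers}(l)$ is the set of delivers returning an update with label $l\neq\bot$. $\mathrm{POB}(L)(C)$ holds iff there exist, for each process $p$, a valid total order $\to_{L_p}$ on $O_C|p$ with $\mathrm{Extends}[O_C|p,\to_{L_p},\to_{\mathrm{prog}_p}\cup\to_{\mathrm{delOrder}}]$ for all $p$, $\mathrm{Agree}[O_C|\mathrm{delivers}(l),\to_{L_p},\to_{L_q}]$ for all $p,q$ and $l\in L$, and for every $p$: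 $\mathrm{bcast}(m,l)\in O_C$ iff $\mathrm{deliver}(m,l)\in O_C|p$. Correct implementation: a transformation $\tau$ maps a multiprogram $P$ to a target multiprogram $\tau(P)$, replacing each specified operation invocation by a target subroutine that returns a response (and possibly adding new threads). A computation $\widehat C$ of $\tau(P)$ is interpreted as the computation $C$ of $P$ in which each specified operation receives the response returned by its subroutine. $\tau$ correctly implements model $MC$ on target model $\widehat{MC}$ if, for every admissible $P$, the interpretation of every (finite, with all subroutines completed) computation of $\tau(P)$ satisfying $\widehat{MC}$ satisfies $MC$. The transformations. Each specified process $p$ becomes a target process $\widehat p$ with a main thread $\widehat p.m$ and a delivery thread $\widehat p.d$, sharing local variables: a replica $\mathrm{Memory}[\widehat p].x$ for each $x\in V$ (initially the initial value of $x$), and counters writes-requested and writes-processed (initially 0). In $\widehat p.m$: a read of $x$ returns $\mathrm{Memory}[\widehat p].x$; a write $\mathrm{write}(x,v)$ increments writes-requested, then performs $\mathrm{bcast}([x,v,\widehat p],i)$ if $x\in V_i$ for some $V_i\in K$, and $\mathrm{bcast}([x,v,\widehat p],\bot)$ otherwise. The procedure WaitWritesComplete busy-waits while writes-processed $<$ writes-requested. In SWFR, WaitWritesComplete is called at the end of every write; in FWSR it is instead called at the beginning of every read. The thread $\widehat p.d$ loops forever: perform a deliver returning $([x,v,\mathit{source}],l)$, set $\mathrm{Memory}[\widehat p].x\gets v$, and if $\mathit{source}=\widehat p$ increment writes-processed. *)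

theory Defs
  imports Main
begin

datatype ('var,'val) inv = RdInv 'var | WrInv 'var 'val

fun inv_var :: "('var,'val) inv \<Rightarrow> 'var" where
  "inv_var (RdInv x) = x"
| "inv_var (WrInv x v) = x"

datatype ('var,'val) sop = SRead 'var 'val | SWrite 'var 'val

fun sop_var :: "('var,'val) sop \<Rightarrow> 'var" where
  "sop_var (SRead x v) = x"
| "sop_var (SWrite x v) = x"

fun is_swrite :: "('var,'val) sop \<Rightarrow> bool" where
  "is_swrite (SRead x v) = False"
| "is_swrite (SWrite x v) = True"

text \<open>A total order on a finite set of operations is represented by a duplicate-free list.\<close>
definition before :: "'a list \<Rightarrow> 'a \<Rightarrow> 'a \<Rightarrow> bool" where
  "before xs a b \<longleftrightarrow> (\<exists>i j. i < j \<and> j < length xs \<and> xs ! i = a \<and> xs ! j = b)"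

definition mem_after :: "('var \<Rightarrow> 'val) \<Rightarrow> ('var,'val) sop list \<Rightarrow> 'var \<Rightarrow> 'val" where
  "mem_after init ops = fold (\<lambda>op m. case op of SWrite x v \<Rightarrow> m(x := v) | SRead x v \<Rightarrow> m) ops init"

definition valid_seq :: "('var \<Rightarrow> 'val) \<Rightarrow> ('var,'val) sop list \<Rightarrow> bool" where
  "valid_seq init ops \<longleftrightarrow>
     (\<forall>k < length ops. \<forall>x v. ops ! k = SRead x v \<longrightarrow> v = mem_after init (take k ops) x)"

text \<open>A computation of the specified multiprogram: one sequence of completed operations
  per (single-threaded) process. Operations are identified by (process, index).\<close>
definition sops_of :: "('p \<Rightarrow> ('var,'val) sop list) \<Rightarrow> 'p \<Rightarrow> ('p \<times> nat) set" where
  "sops_of C p = {(p, i) | i. i < length (C p)}"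

definition sop_at :: "('p \<Rightarrow> ('var,'val) sop list) \<Rightarrow> 'p \<times> nat \<Rightarrow> ('var,'val) sop" where
  "sop_at C a = C (fst a) ! snd a"

definition swrites :: "('p \<Rightarrow> ('var,'val) sop list) \<Rightarrow> ('p \<times> nat) set" where
  "swrites C = {(q, i) | q i. i < length (C q) \<and> is_swrite (C q ! i)}"

definition swrites_in :: "('p \<Rightarrow> ('var,'val) sop list) \<Rightarrow> 'var set \<Rightarrow> ('p \<times> nat) set" where
  "swrites_in C S = {a \<in> swrites C. sop_var (sop_at C a) \<in> S}"

definition sprog :: "'p \<times> nat \<Rightarrow> 'p \<times> nat \<Rightarrow> bool" where
  "sprog a b \<longleftrightarrow> fst a = fst b \<and> snd a < snd b"

text \<open>K = {V_1,...,V_m} is given as the list [V_1,...,V_m]: a partition of a subset of V.\<close>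
definition partition_of_subset :: "'var set list \<Rightarrow> 'var set \<Rightarrow> bool" where
  "partition_of_subset Ks V \<longleftrightarrow>
     (\<forall>i < length Ks. Ks ! i \<noteq> {} \<and> Ks ! i \<subseteq> V) \<and>
     (\<forall>i j. i < length Ks \<longrightarrow> j < length Ks \<longrightarrow> i \<noteq> j \<longrightarrow> Ks ! i \<inter> Ks ! j = {})"

definition PC :: "'var set list \<Rightarrow> ('var \<Rightarrow> 'val) \<Rightarrow> ('p \<Rightarrow> ('var,'val) sop list) \<Rightarrow> bool" where
  "PC Ks init C \<longleftrightarrow>
    (\<exists>L :: 'p \<Rightarrow> ('p \<times> nat) list.
       (\<forall>p. distinct (L p) \<and> set (L p) = sops_of C p \<union> swrites C \<and>
            valid_seq init (map (sop_at C) (L p)) \<and>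
            (\<forall>a \<in> set (L p). \<forall>b \<in> set (L p). sprog a b \<longrightarrow> before (L p) a b)) \<and>
       (\<forall>p q. \<forall>i < length Ks. \<forall>a \<in> swrites_in C (Ks ! i). \<forall>b \<in> swrites_in C (Ks ! i).
            before (L p) a b \<longleftrightarrow> before (L q) a b))"

text \<open>Update objects. Update objects are unique: besides the payload [x, v, source]
  an update carries the sequence number of the write (among the writes of its source)
  that broadcast it.\<close>
datatype ('p,'var,'val) upd = Upd 'p nat 'var 'val

text \<open>Target operations: accesses to the local variables Memory.x, writes-requested,
  writes-processed, and broadcast operations (label None = unlabeled).\<close>
datatype ('p,'var,'val) top =
    TReadMem 'var 'val | TWriteMem 'var 'val
  | TReadReq nat | TWriteReq nat
  | TReadPrc nat | TWritePrc nat
  | TBcast "('p,'var,'val) upd" "nat option"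
  | TDeliver "('p,'var,'val) upd" "nat option"

datatype thr = MainT | DelT

datatype transformation = SWFR | FWSR

definition tmem_after :: "('var \<Rightarrow> 'val) \<Rightarrow> ('p,'var,'val) top list \<Rightarrow> 'var \<Rightarrow> 'val" where
  "tmem_after init ops = fold (\<lambda>op m. case op of TWriteMem y v \<Rightarrow> m(y := v) | _ \<Rightarrow> m) ops init"

definition req_after :: "('p,'var,'val) top list \<Rightarrow> nat" where
  "req_after ops = fold (\<lambda>op n. case op of TWriteReq k \<Rightarrow> k | _ \<Rightarrow> n) ops 0"

definition prc_after :: "('p,'var,'val) top list \<Rightarrow> nat" where
  "prc_after ops = fold (\<lambda>op n. case op of TWritePrc k \<Rightarrow> k | _ \<Rightarrow> n) ops 0"

definition tvalid :: "('var \<Rightarrow> 'val) \<Rightarrow> ('p,'var,'val) top list \<Rightarrow> bool" where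
  "tvalid init ops \<longleftrightarrow>
     (\<forall>k < length ops.
        (\<forall>x v. ops ! k = TReadMem x v \<longrightarrow> v = tmem_after init (take k ops) x) \<and>
        (\<forall>n. ops ! k = TReadReq n \<longrightarrow> n = req_after (take k ops)) \<and>
        (\<forall>n. ops ! k = TReadPrc n \<longrightarrow> n = prc_after (take k ops))) \<and>
     (\<forall>j k u l. j < length ops \<longrightarrow> k < length ops \<longrightarrow>
        ops ! k = TDeliver u l \<longrightarrow> ops ! j = TBcast u l \<longrightarrow> j < k) \<and>
     (\<forall>j k u l. j < length ops \<longrightarrow> k < length ops \<longrightarrow>
        ops ! j = TDeliver u l \<longrightarrow> ops ! k = TDeliver u l \<longrightarrow> j = k)"

text \<open>A target computation: M p is the main thread of p-hat, D p its delivery thread.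
  Operations are identified by (process, thread, index).\<close>
definition tthread :: "('p \<Rightarrow> ('p,'var,'val) top list) \<Rightarrow> ('p \<Rightarrow> ('p,'var,'val) top list)
    \<Rightarrow> 'p \<Rightarrow> thr \<Rightarrow> ('p,'var,'val) top list" where
  "tthread M D p t = (case t of MainT \<Rightarrow> M p | DelT \<Rightarrow> D p)"

definition tops_of :: "('p \<Rightarrow> ('p,'var,'val) top list) \<Rightarrow> ('p \<Rightarrow> ('p,'var,'val) top list)
    \<Rightarrow> 'p \<Rightarrow> ('p \<times> thr \<times> nat) set" where
  "tops_of M D p = {(p, t, i) | t i. i < length (tthread M D p t)}"

definition all_tops :: "('p \<Rightarrow> ('p,'var,'val) top list) \<Rightarrow> ('p \<Rightarrow> ('p,'var,'val) top list)
    \<Rightarrow> ('p \<times> thr \<times> nat) set" where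
  "all_tops M D = (\<Union>p. tops_of M D p)"

definition top_at :: "('p \<Rightarrow> ('p,'var,'val) top list) \<Rightarrow> ('p \<Rightarrow> ('p,'var,'val) top list)
    \<Rightarrow> 'p \<times> thr \<times> nat \<Rightarrow> ('p,'var,'val) top" where
  "top_at M D a = (case a of (p, t, i) \<Rightarrow> tthread M D p t ! i)"

definition tprog :: "'p \<times> thr \<times> nat \<Rightarrow> 'p \<times> thr \<times> nat \<Rightarrow> bool" where
  "tprog a b \<longleftrightarrow> (case a of (p, t, i) \<Rightarrow> case b of (q, s, j) \<Rightarrow> p = q \<and> t = s \<and> i < j)"

definition delOrder :: "('p \<Rightarrow> ('p,'var,'val) top list) \<Rightarrow> ('p \<Rightarrow> ('p,'var,'val) top list)
    \<Rightarrow> 'p \<times> thr \<times> nat \<Rightarrow> 'p \<times> thr \<times> nat \<Rightarrow> bool" where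
  "delOrder M D a b \<longleftrightarrow>
     (\<exists>u1 l1 u2 l2. top_at M D a = TDeliver u1 l1 \<and> top_at M D b = TDeliver u2 l2 \<and>
        (\<exists>c \<in> all_tops M D. \<exists>d \<in> all_tops M D. tprog c d \<and>
            top_at M D c = TBcast u1 l1 \<and> top_at M D d = TBcast u2 l2))"

text \<open>Deliveries with label l of u1 before u2 in the order Lp (deliveries at different
  processes are identified through the update they deliver).\<close>
definition del_before :: "('p \<Rightarrow> ('p,'var,'val) top list) \<Rightarrow> ('p \<Rightarrow> ('p,'var,'val) top list)
    \<Rightarrow> ('p \<times> thr \<times> nat) list \<Rightarrow> ('p,'var,'val) upd \<Rightarrow> ('p,'var,'val) upd \<Rightarrow> nat \<Rightarrow> bool" where
  "del_before M D Lp u1 u2 l \<longleftrightarrow>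
     (\<exists>a b. before Lp a b \<and> top_at M D a = TDeliver u1 (Some l) \<and> top_at M D b = TDeliver u2 (Some l))"

definition POB :: "nat \<Rightarrow> ('var \<Rightarrow> 'val) \<Rightarrow> ('p \<Rightarrow> ('p,'var,'val) top list)
    \<Rightarrow> ('p \<Rightarrow> ('p,'var,'val) top list) \<Rightarrow> bool" where
  "POB m init M D \<longleftrightarrow>
    (\<exists>L :: 'p \<Rightarrow> ('p \<times> thr \<times> nat) list.
       (\<forall>p. distinct (L p) \<and> set (L p) = tops_of M D p \<and>
            tvalid init (map (top_at M D) (L p)) \<and>
            (\<forall>a \<in> set (L p). \<forall>b \<in> set (L p).
               tprog a b \<or> delOrder M D a b \<longrightarrow> before (L p) a b)) \<and>
       (\<forall>p q. \<forall>l \<in> {1..m}. \<forall>u1 u2.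
            del_before M D (L p) u1 u2 l \<longleftrightarrow> del_before M D (L q) u1 u2 l) \<and>
       (\<forall>p u l. (\<exists>a \<in> all_tops M D. top_at M D a = TBcast u l) \<longleftrightarrow>
                (\<exists>a \<in> tops_of M D p. top_at M D a = TDeliver u l)))"

text \<open>Label of a variable: i if x is in V_i (labels 1..m), None (unlabeled) otherwise.\<close>
definition label :: "'var set list \<Rightarrow> 'var \<Rightarrow> nat option" where
  "label Ks x = (if \<exists>i < length Ks. x \<in> Ks ! i
                 then Some (Suc (SOME i. i < length Ks \<and> x \<in> Ks ! i)) else None)"

text \<open>Completed executions of WaitWritesComplete: repeatedly read writes-processed and
  writes-requested, until writes-processed is not smaller than writes-requested.\<close>
inductive wwc_trace :: "('p,'var,'val) top list \<Rightarrow> bool" where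
  wwc_exit: "\<not> a < b \<Longrightarrow> wwc_trace [TReadPrc a, TReadReq b]"
| wwc_loop: "a < b \<Longrightarrow> wwc_trace w \<Longrightarrow> wwc_trace (TReadPrc a # TReadReq b # w)"

text \<open>main_exec tr Ks p n ivs ms cs: the main thread of p-hat, executing the (completed)
  subroutines of transformation tr for the invocations ivs (n = number of earlier writes
  of p), performs ms; the interpreted specified operations (with responses) are cs.\<close>
inductive main_exec :: "transformation \<Rightarrow> 'var set list \<Rightarrow> 'p \<Rightarrow> nat \<Rightarrow> ('var,'val) inv list
    \<Rightarrow> ('p,'var,'val) top list \<Rightarrow> ('var,'val) sop list \<Rightarrow> bool" where
  me_nil: "main_exec tr Ks p n [] [] []"
| me_rd_swfr: "main_exec SWFR Ks p n ivs ms cs \<Longrightarrow>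
    main_exec SWFR Ks p n (RdInv x # ivs) (TReadMem x v # ms) (SRead x v # cs)"
| me_rd_fwsr: "wwc_trace w \<Longrightarrow> main_exec FWSR Ks p n ivs ms cs \<Longrightarrow>
    main_exec FWSR Ks p n (RdInv x # ivs) (w @ TReadMem x v # ms) (SRead x v # cs)"
| me_wr_swfr: "wwc_trace w \<Longrightarrow> main_exec SWFR Ks p (Suc n) ivs ms cs \<Longrightarrow>
    main_exec SWFR Ks p n (WrInv x v # ivs)
      ([TReadReq r, TWriteReq (Suc r), TBcast (Upd p n x v) (label Ks x)] @ w @ ms)
      (SWrite x v # cs)"
| me_wr_fwsr: "main_exec FWSR Ks p (Suc n) ivs ms cs \<Longrightarrow>
    main_exec FWSR Ks p n (WrInv x v # ivs)
      ([TReadReq r, TWriteReq (Suc r), TBcast (Upd p n x v) (label Ks x)] @ ms)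
      (SWrite x v # cs)"

text \<open>One complete iteration of the delivery loop of p-hat (k = value read from
  writes-processed).\<close>
definition del_iter :: "'p \<Rightarrow> ('p,'var,'val) upd \<Rightarrow> nat option \<Rightarrow> nat \<Rightarrow> ('p,'var,'val) top list" where
  "del_iter p u l k = (case u of Upd s n x v \<Rightarrow>
      [TDeliver u l, TWriteMem x v] @ (if s = p then [TReadPrc k, TWritePrc (Suc k)] else []))"

text \<open>A finite execution of the delivery thread: a prefix of finitely many iterations
  (the last one possibly incomplete).\<close>
definition del_trace :: "'p \<Rightarrow> ('p,'var,'val) top list \<Rightarrow> bool" where
  "del_trace p ds \<longleftrightarrow>
     (\<exists>its ys. ds @ ys = concat (map (\<lambda>(u, l, k). del_iter p u l k) its))"

end

theory Submission
  imports Defs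
begin

text \<open>Each process \<open>p\<close> gets a view built from the order in which POB lets \<open>p\<close> see its own
  target operations: a read of the local replica stands for the specified read it implements,
  an update of the replica for the write whose broadcast update it applies.  Since the replica
  is changed by nothing else, it evolves like the memory of this view, which is therefore valid.
  Writes to one class of \<open>K\<close> carry the same label, so all processes deliver, and hence apply,
  them in the same order.  Program order is respected: the updates of a process are delivered in
  broadcast order, and a read that follows a write of the same process comes after a completed
  WaitWritesComplete, whose exit test (writes-processed \<open>\<ge>\<close> writes-requested, both being
  counters of the writes concerned) forces the delivery thread to have applied that write.\<close>

section \<open>Total orders as duplicate-free lists\<close>

lemma before_in_set: "before xs a b \<Longrightarrow> a \<in> set xs \<and> b \<in> set xs"
  unfolding before_def by auto

lemma before_nth_iff:
  assumes "distinct xs" "i < length xs" "j < length xs"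
  shows "before xs (xs!i) (xs!j) \<longleftrightarrow> i < j"
  using assms unfolding before_def by (auto simp: nth_eq_iff_index_eq)

lemma before_irrefl: "distinct xs \<Longrightarrow> \<not> before xs a a"
  unfolding before_def by (auto simp: nth_eq_iff_index_eq)

lemma before_asym: "distinct xs \<Longrightarrow> before xs a b \<Longrightarrow> \<not> before xs b a"
  unfolding before_def by (auto simp: nth_eq_iff_index_eq)

lemma before_trans: "distinct xs \<Longrightarrow> before xs a b \<Longrightarrow> before xs b c \<Longrightarrow> before xs a c"
  unfolding before_def by (metis less_trans nth_eq_iff_index_eq)

lemma before_iff_append: "before xs a b \<longleftrightarrow> (\<exists>ys zs. xs = ys @ zs \<and> a \<in> set ys \<and> b \<in> set zs)"
proof
  assume "before xs a b"
  then obtain i j where ij: "i < j" "j < length xs" "xs!i = a" "xs!j = b"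
    unfolding before_def by auto
  have "a \<in> set (take (Suc i) xs)"
    using ij by (auto simp: in_set_conv_nth intro!: exI[of _ i])
  moreover have "b \<in> set (drop (Suc i) xs)"
    using ij by (auto simp: in_set_conv_nth intro!: exI[of _ "j - Suc i"])
  ultimately show "\<exists>ys zs. xs = ys @ zs \<and> a \<in> set ys \<and> b \<in> set zs"
    by (metis append_take_drop_id)
next
  assume "\<exists>ys zs. xs = ys @ zs \<and> a \<in> set ys \<and> b \<in> set zs"
  then obtain ys zs i j where "xs = ys @ zs" "i < length ys" "ys!i = a" "j < length zs" "zs!j = b"
    by (auto simp: in_set_conv_nth)
  then show "before xs a b"
    unfolding before_def by (intro exI[of _ i] exI[of _ "length ys + j"]) (auto simp: nth_append)
qed

lemma filter_eq_appendD:
  "filter P xs = ys @ zs \<Longrightarrow> \<exists>us vs. xs = us @ vs \<and> filter P us = ys \<and> filter P vs = zs"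
proof (induction xs arbitrary: ys)
  case Nil
  then show ?case by auto
next
  case (Cons x xs)
  show ?case
  proof (cases "P x \<and> ys \<noteq> []")
    case True
    with Cons.prems obtain ys' where "ys = x # ys'" "filter P xs = ys' @ zs"
      by (cases ys) auto
    with Cons.IH True show ?thesis by (metis append_Cons filter.simps(2))
  next
    case False
    show ?thesis
    proof (cases "P x")
      case True
      with False Cons.prems show ?thesis by (intro exI[of _ "[]"] exI[of _ "x # xs"]) auto
    next
      case nP: False
      with Cons.prems Cons.IH[of ys] show ?thesis by (metis append_Cons filter.simps(2))
    qed
  qed
qed

lemma before_filter_iff: "before (filter P xs) a b \<longleftrightarrow> P a \<and> P b \<and> before xs a b"
proof
  assume "before (filter P xs) a b"
  then obtain ys zs where "filter P xs = ys @ zs" "a \<in> set ys" "b \<in> set zs"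
    by (auto simp: before_iff_append)
  with filter_eq_appendD[OF this(1)] show "P a \<and> P b \<and> before xs a b"
    unfolding before_iff_append by auto blast
next
  assume "P a \<and> P b \<and> before xs a b"
  then obtain ys zs where "xs = ys @ zs" "a \<in> set ys" "b \<in> set zs" "P a" "P b"
    by (auto simp: before_iff_append)
  then show "before (filter P xs) a b"
    unfolding before_iff_append by (intro exI[of _ "filter P ys"] exI[of _ "filter P zs"]) auto
qed

lemma before_map_iff:
  assumes inj: "inj_on h (set xs)" and ab: "a \<in> set xs" "b \<in> set xs"
  shows "before (map h xs) (h a) (h b) \<longleftrightarrow> before xs a b"
proof
  assume "before (map h xs) (h a) (h b)"
  then obtain us vs where uv: "xs = us @ vs" "h a \<in> h ` set us" "h b \<in> h ` set vs"
    by (auto simp: before_iff_append map_eq_append_conv)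
  with inj ab have "a \<in> set us" "b \<in> set vs"
    by (auto simp: inj_on_def)
  with uv show "before xs a b" unfolding before_iff_append by blast
next
  assume "before xs a b"
  then obtain ys zs where "xs = ys @ zs" "a \<in> set ys" "b \<in> set zs"
    unfolding before_iff_append by blast
  then show "before (map h xs) (h a) (h b)"
    unfolding before_iff_append by (intro exI[of _ "map h ys"] exI[of _ "map h zs"]) auto
qed

lemma before_append_left: "before xs a b \<Longrightarrow> before (xs @ ys) a b"
  unfolding before_iff_append by force

lemma before_snoc_last: "a \<in> set xs \<Longrightarrow> before (xs @ [e]) a e"
  unfolding before_iff_append by (intro exI[of _ xs] exI[of _ "[e]"]) auto

lemma card_indices_before:
  assumes d: "distinct xs" and k: "k < length xs"
  shows "card {q. q < k \<and> P (xs!q)} = card {x. before xs x (xs!k) \<and> P x}"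
proof -
  have "before xs x (xs!k) \<longleftrightarrow> (\<exists>q<k. x = xs!q)" for x
    using d k unfolding before_def by (auto simp: nth_eq_iff_index_eq)
  then have "{x. before xs x (xs!k) \<and> P x} = (!) xs ` {q. q < k \<and> P (xs!q)}"
    by auto
  moreover have "inj_on ((!) xs) {q. q < k \<and> P (xs!q)}"
    using d k by (auto simp: inj_on_def nth_eq_iff_index_eq)
  ultimately show ?thesis by (simp add: card_image)
qed

section \<open>Counter variables\<close>

definition counter_after :: "('a \<Rightarrow> nat option) \<Rightarrow> 'a list \<Rightarrow> nat" where
  "counter_after wr xs = fold (\<lambda>op n. case wr op of Some k \<Rightarrow> k | None \<Rightarrow> n) xs 0"

lemma counter_after_snoc:
  "counter_after wr (xs @ [op]) = (case wr op of Some k \<Rightarrow> k | None \<Rightarrow> counter_after wr xs)"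
  unfolding counter_after_def by simp

lemma counter_after_eq_card:
  assumes reads: "\<And>j r. j < length xs \<Longrightarrow> rd (xs!j) = Some r \<Longrightarrow> r = counter_after wr (take j xs)"
    and increments: "\<And>k v. k < length xs \<Longrightarrow> wr (xs!k) = Some v \<Longrightarrow>
        \<exists>j<k. \<exists>r. rd (xs!j) = Some r \<and> v = Suc r \<and> (\<forall>q. j \<le> q \<longrightarrow> q < k \<longrightarrow> wr (xs!q) = None)"
    and "k \<le> length xs"
  shows "counter_after wr (take k xs) = card {q. q < k \<and> wr (xs!q) \<noteq> None}"
  using \<open>k \<le> length xs\<close>
proof (induction k rule: less_induct)
  case (less k)
  show ?case
  proof (cases k)
    case 0
    then show ?thesis by (simp add: counter_after_def)
  next
    case (Suc k0)
    have k0: "k0 < length xs" using less.prems Suc by simp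
    have take_k: "take k xs = take k0 xs @ [xs!k0]"
      using Suc k0 by (simp add: take_Suc_conv_app_nth)
    have writes_k: "{q. q < k \<and> wr (xs!q) \<noteq> None} =
        {q. q < k0 \<and> wr (xs!q) \<noteq> None} \<union> (if wr (xs!k0) \<noteq> None then {k0} else {})"
      using Suc by (auto simp: less_Suc_eq)
    show ?thesis
    proof (cases "wr (xs!k0)")
      case None
      then show ?thesis
        using less.IH[of k0] Suc k0 writes_k unfolding take_k by (simp add: counter_after_snoc)
    next
      case (Some v)
      then obtain j r where j: "j < k0" "rd (xs!j) = Some r" "v = Suc r"
          and no_write: "\<forall>q. j \<le> q \<longrightarrow> q < k0 \<longrightarrow> wr (xs!q) = None"
        using increments[OF k0] by blast
      have "r = card {q. q < j \<and> wr (xs!q) \<noteq> None}"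
        using reads[of j r] less.IH[of j] j Suc k0 by simp
      also have "{q. q < j \<and> wr (xs!q) \<noteq> None} = {q. q < k0 \<and> wr (xs!q) \<noteq> None}"
        using j(1) no_write by (auto simp: not_less) (metis not_le option.distinct(1))
      finally show ?thesis
        using Some j(3) writes_k unfolding take_k by (simp add: counter_after_snoc card_insert_if)
    qed
  qed
qed

definition req_write :: "('p,'var,'val) top \<Rightarrow> nat option" where
  "req_write op = (case op of TWriteReq k \<Rightarrow> Some k | _ \<Rightarrow> None)"

definition req_read :: "('p,'var,'val) top \<Rightarrow> nat option" where
  "req_read op = (case op of TReadReq k \<Rightarrow> Some k | _ \<Rightarrow> None)"

definition prc_write :: "('p,'var,'val) top \<Rightarrow> nat option" where
  "prc_write op = (case op of TWritePrc k \<Rightarrow> Some k | _ \<Rightarrow> None)"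

definition prc_read :: "('p,'var,'val) top \<Rightarrow> nat option" where
  "prc_read op = (case op of TReadPrc k \<Rightarrow> Some k | _ \<Rightarrow> None)"

lemma req_after_eq_counter_after: "req_after xs = counter_after req_write xs"
  unfolding req_after_def counter_after_def
  by (rule fold_cong) (auto simp: req_write_def split: top.split)

lemma prc_after_eq_counter_after: "prc_after xs = counter_after prc_write xs"
  unfolding prc_after_def counter_after_def
  by (rule fold_cong) (auto simp: prc_write_def split: top.split)

section \<open>Memory replicas\<close>

fun as_sops :: "('p,'var,'val) top \<Rightarrow> ('var,'val) sop list" where
  "as_sops (TReadMem x v) = [SRead x v]"
| "as_sops (TWriteMem x v) = [SWrite x v]"
| "as_sops _ = []"

lemma mem_after_as_sops: "mem_after init (concat (map as_sops xs)) = tmem_after init xs"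
proof (induction xs rule: rev_induct)
  case Nil
  then show ?case by (simp add: mem_after_def tmem_after_def)
next
  case (snoc op xs)
  then show ?case by (cases op) (simp_all add: mem_after_def tmem_after_def)
qed

lemma valid_seq_snoc:
  "valid_seq init (ys @ [op]) \<longleftrightarrow> valid_seq init ys \<and> (\<forall>x v. op = SRead x v \<longrightarrow> v = mem_after init ys x)"
  unfolding valid_seq_def by (auto simp: nth_append less_Suc_eq)

lemma valid_seq_as_sops:
  "\<forall>k<length xs. \<forall>x v. xs!k = TReadMem x v \<longrightarrow> v = tmem_after init (take k xs) x \<Longrightarrow>
   valid_seq init (concat (map as_sops xs))"
proof (induction xs rule: rev_induct)
  case Nil
  then show ?case by (simp add: valid_seq_def)
next
  case (snoc op xs)
  then have "valid_seq init (concat (map as_sops xs))"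
    by (auto simp: nth_append)
  moreover have "\<forall>x v. op = TReadMem x v \<longrightarrow> v = tmem_after init xs x"
    using snoc.prems[rule_format, of "length xs"] by simp
  ultimately show ?case
    by (cases op) (simp_all add: valid_seq_snoc mem_after_as_sops)
qed

lemma map_filter_concat: "map f (filter P xs) = concat (map (\<lambda>x. if P x then [f x] else []) xs)"
  by (induction xs) auto

lemma valid_seq_append_writes:
  "valid_seq init ys \<Longrightarrow> \<forall>op\<in>set zs. is_swrite op \<Longrightarrow> valid_seq init (ys @ zs)"
proof (induction zs rule: rev_induct)
  case (snoc z zs)
  then show ?case
    using valid_seq_snoc[of init "ys @ zs" z] by (cases z) auto
qed simp

section \<open>The delivery thread\<close>

definition del_op :: "('p,'var,'val) top \<Rightarrow> bool" where
  "del_op op \<longleftrightarrow> (case op of TDeliver _ _ \<Rightarrow> True | TWriteMem _ _ \<Rightarrow> True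
                  | TReadPrc _ \<Rightarrow> True | TWritePrc _ \<Rightarrow> True | _ \<Rightarrow> False)"

definition deliver_upd :: "('p,'var,'val) top \<Rightarrow> ('p,'var,'val) upd" where
  "deliver_upd op = (case op of TDeliver u l \<Rightarrow> u)"

abbreviation del_iters :: "'p \<Rightarrow> (('p,'var,'val) upd \<times> nat option \<times> nat) list \<Rightarrow> ('p,'var,'val) top list" where
  "del_iters p its \<equiv> concat (map (\<lambda>(u, l, k). del_iter p u l k) its)"

definition del_shape :: "'p \<Rightarrow> ('p,'var,'val) top list \<Rightarrow> nat \<Rightarrow> bool" where
  "del_shape p ds d \<longleftrightarrow> del_op (ds!d) \<and>
    (\<forall>u l. ds!d = TDeliver u l \<longrightarrow>
       Suc d < length ds \<and> (\<exists>s n x v. u = Upd s n x v \<and> ds ! Suc d = TWriteMem x v)) \<and>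
    (\<forall>x v. ds!d = TWriteMem x v \<longrightarrow> 0 < d \<and> (\<exists>s n l. ds ! (d - 1) = TDeliver (Upd s n x v) l)) \<and>
    (\<forall>j. ds!d = TWritePrc j \<longrightarrow>
       3 \<le> d \<and> (\<exists>k. j = Suc k \<and> ds ! (d - 1) = TReadPrc k) \<and> (\<exists>n x v l. ds ! (d - 3) = TDeliver (Upd p n x v) l))"

lemma del_shape_iter:
  assumes "d < length (del_iter p u l k)"
  shows "del_shape p (del_iter p u l k @ ds) d"
proof (cases u)
  case (Upd s n x v)
  show ?thesis
  proof (cases "s = p")
    case True
    with assms Upd have "d = 0 \<or> d = 1 \<or> d = 2 \<or> d = 3"
      by (auto simp: del_iter_def)
    then show ?thesis
      using Upd True by (elim disjE) (auto simp: del_iter_def del_shape_def del_op_def)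
  next
    case False
    with assms Upd have "d = 0 \<or> d = 1"
      by (auto simp: del_iter_def)
    then show ?thesis
      using Upd False by (elim disjE) (auto simp: del_iter_def del_shape_def del_op_def)
  qed
qed

lemma del_shape_shift:
  assumes shape: "del_shape p ds d" and I: "2 \<le> length I"
  shows "del_shape p (I @ ds) (length I + d)"
proof -
  have shift: "(I @ ds) ! (length I + d - i) = ds ! (d - i)" if "i \<le> d" for i
    using that nth_append_length_plus[of I ds "d - i"] by (simp add: add_diff_assoc)
  have "0 < d \<Longrightarrow> (I @ ds) ! (length I + d - 1) = ds ! (d - 1)" "3 \<le> d \<Longrightarrow> (I @ ds) ! (length I + d - 3) = ds ! (d - 3)"
    using shift[of 1] shift[of 3] by simp_all
  moreover have "(I @ ds) ! (length I + d) = ds ! d" "(I @ ds) ! Suc (length I + d) = ds ! Suc d"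
    by (simp_all add: nth_append)
  ultimately show ?thesis
    using shape I unfolding del_shape_def by (auto simp del: One_nat_def)
qed

lemma del_iters_shape: "d < length (del_iters p its) \<Longrightarrow> del_shape p (del_iters p its) d"
proof (induction its arbitrary: d)
  case (Cons it its)
  obtain u l k where it: "it = (u, l, k)"
    by (cases it)
  have len: "2 \<le> length (del_iter p u l k)"
    by (cases u) (simp add: del_iter_def)
  show ?case
  proof (cases "d < length (del_iter p u l k)")
    case True
    then show ?thesis
      using del_shape_iter it by simp
  next
    case False
    then obtain d' where "d = length (del_iter p u l k) + d'"
      using le_Suc_ex not_less by blast
    with Cons.prems Cons.IH[of d'] show ?thesis
      using del_shape_shift[OF _ len] it by simp
  qed
qed simp

lemma del_trace_nth:
  assumes trace: "del_trace p ds" and d: "d < length ds"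
  shows del_trace_op: "del_op (ds!d)"
    and del_trace_deliver: "\<And>u l. ds!d = TDeliver u l \<Longrightarrow> Suc d < length ds \<Longrightarrow>
          \<exists>s n x v. u = Upd s n x v \<and> ds ! Suc d = TWriteMem x v"
    and del_trace_write_mem: "\<And>x v. ds!d = TWriteMem x v \<Longrightarrow>
          0 < d \<and> (\<exists>s n l. ds ! (d - 1) = TDeliver (Upd s n x v) l)"
    and del_trace_write_prc: "\<And>j. ds!d = TWritePrc j \<Longrightarrow>
          3 \<le> d \<and> (\<exists>k. j = Suc k \<and> ds ! (d - 1) = TReadPrc k) \<and> (\<exists>n x v l. ds ! (d - 3) = TDeliver (Upd p n x v) l)"
proof -
  obtain its ys where its: "ds @ ys = del_iters p its"
    using trace unfolding del_trace_def by blast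
  have nth: "\<And>i. i < length ds \<Longrightarrow> ds ! i = del_iters p its ! i"
    using its[symmetric] by (simp add: nth_append)
  have "d < length (del_iters p its)"
    using d its[symmetric] by simp
  note props = del_iters_shape[OF this, unfolded del_shape_def] nth[OF d]
  show "del_op (ds!d)"
    using props by simp
  show "\<And>u l. ds!d = TDeliver u l \<Longrightarrow> Suc d < length ds \<Longrightarrow> \<exists>s n x v. u = Upd s n x v \<and> ds ! Suc d = TWriteMem x v"
    using props nth[of "Suc d"] by auto
  show "\<And>x v. ds!d = TWriteMem x v \<Longrightarrow> 0 < d \<and> (\<exists>s n l. ds ! (d - 1) = TDeliver (Upd s n x v) l)"
    using props nth[of "d - 1"] d by auto
  show "\<And>j. ds!d = TWritePrc j \<Longrightarrow>
          3 \<le> d \<and> (\<exists>k. j = Suc k \<and> ds ! (d - 1) = TReadPrc k) \<and> (\<exists>n x v l. ds ! (d - 3) = TDeliver (Upd p n x v) l)"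
    using props nth[of "d - 1"] nth[of "d - 3"] d by auto
qed

section \<open>The main thread\<close>

lemma is_swrite_iff: "is_swrite c \<longleftrightarrow> (\<exists>x v. c = SWrite x v)"
  by (cases c) auto

definition writes_before :: "('var,'val) sop list \<Rightarrow> nat \<Rightarrow> nat" where
  "writes_before cs i = length (filter is_swrite (take i cs))"

lemma writes_before_0: "writes_before cs 0 = 0"
  by (simp add: writes_before_def)

lemma writes_before_Cons_Suc:
  "writes_before (c # cs) (Suc i) = (if is_swrite c then Suc (writes_before cs i) else writes_before cs i)"
  by (simp add: writes_before_def)

lemma writes_before_Suc:
  "i < length cs \<Longrightarrow> writes_before cs (Suc i) = writes_before cs i + (if is_swrite (cs!i) then 1 else 0)"
  by (simp add: writes_before_def take_Suc_conv_app_nth)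

lemma writes_before_mono: "i \<le> j \<Longrightarrow> writes_before cs i \<le> writes_before cs j"
  unfolding writes_before_def by (metis filter_append le_add1 length_append take_add le_add_diff_inverse)

lemma writes_before_strict_mono:
  "i < j \<Longrightarrow> j \<le> length cs \<Longrightarrow> is_swrite (cs!i) \<Longrightarrow> writes_before cs i < writes_before cs j"
  using writes_before_Suc[of i cs] writes_before_mono[of "Suc i" j cs] by simp

text \<open>A completed WaitWritesComplete ends with a read of writes-processed at \<open>w\<close>
  followed by a read of writes-requested returning no larger value.\<close>

definition wait_exits_at :: "('p,'var,'val) top list \<Rightarrow> nat \<Rightarrow> bool" where
  "wait_exits_at ms w \<longleftrightarrow>
     (\<exists>a c. Suc w < length ms \<and> ms!w = TReadPrc a \<and> ms!(Suc w) = TReadReq c \<and> c \<le> a)"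

lemma wait_exits_at_shift: "wait_exits_at ms w \<Longrightarrow> wait_exits_at (seg @ ms) (length seg + w)"
  unfolding wait_exits_at_def by (auto simp: nth_append)

lemma wait_exits_at_append: "wait_exits_at seg w \<Longrightarrow> wait_exits_at (seg @ ms) w"
  unfolding wait_exits_at_def by (auto simp: nth_append)

lemma wwc_trace_wait:
  "wwc_trace w \<Longrightarrow> 2 \<le> length w \<and> wait_exits_at w (length w - 2) \<and>
     (\<forall>m<length w. (\<exists>a. w!m = TReadPrc a) \<or> (\<exists>a. w!m = TReadReq a))"
proof (induction rule: wwc_trace.induct)
  case (wwc_exit a b)
  then show ?case unfolding wait_exits_at_def by (auto simp: less_Suc_eq nth_Cons')
next
  case (wwc_loop a b w)
  then have "length [TReadPrc a, TReadReq b] + (length w - 2) = length w"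
    by auto
  with wwc_loop.IH have "wait_exits_at (TReadPrc a # TReadReq b # w) (length w)"
    using wait_exits_at_shift[of w "length w - 2" "[TReadPrc a, TReadReq b]"] by simp
  with wwc_loop.IH show ?case
    by (auto simp: nth_Cons' split: nat.split)
qed

definition main_op :: "('p,'var,'val) top \<Rightarrow> bool" where
  "main_op op \<longleftrightarrow> (case op of TWriteMem _ _ \<Rightarrow> False | TWritePrc _ \<Rightarrow> False | TDeliver _ _ \<Rightarrow> False | _ \<Rightarrow> True)"

text \<open>\<open>main_layout tr Ks p n ms cs \<rho>\<close>: the \<open>i\<close>-th specified operation \<open>cs!i\<close> is implemented by
  the target operation \<open>ms!(\<rho> i)\<close> (the read of the replica, resp. the broadcast), \<open>n\<close>
  counting the writes of \<open>p\<close> issued before \<open>cs\<close>.\<close>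

definition main_layout :: "transformation \<Rightarrow> 'var set list \<Rightarrow> 'p \<Rightarrow> nat \<Rightarrow>
    ('p,'var,'val) top list \<Rightarrow> ('var,'val) sop list \<Rightarrow> (nat \<Rightarrow> nat) \<Rightarrow> bool" where
  "main_layout tr Ks p n ms cs \<rho> \<longleftrightarrow>
    (\<forall>i j. i < j \<longrightarrow> j < length cs \<longrightarrow> \<rho> i < \<rho> j) \<and>
    (\<forall>i<length cs. \<rho> i < length ms) \<and>
    (\<forall>i<length cs. \<forall>x v. cs!i = SRead x v \<longrightarrow> ms!(\<rho> i) = TReadMem x v) \<and>
    (\<forall>i<length cs. \<forall>x v. cs!i = SWrite x v \<longrightarrow>
       2 \<le> \<rho> i \<and> ms!(\<rho> i) = TBcast (Upd p (n + writes_before cs i) x v) (label Ks x) \<and>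
       (\<exists>r. ms!(\<rho> i - 1) = TWriteReq (Suc r) \<and> ms!(\<rho> i - 2) = TReadReq r)) \<and>
    (\<forall>m<length ms. \<forall>x v. ms!m = TReadMem x v \<longrightarrow> (\<exists>i<length cs. \<rho> i = m)) \<and>
    (\<forall>m<length ms. \<forall>u l. ms!m = TBcast u l \<longrightarrow> (\<exists>i<length cs. \<rho> i = m)) \<and>
    (\<forall>m<length ms. \<forall>k. ms!m = TWriteReq k \<longrightarrow> (\<exists>i<length cs. is_swrite (cs!i) \<and> \<rho> i = Suc m)) \<and>
    (\<forall>m<length ms. main_op (ms!m)) \<and>
    (tr = SWFR \<longrightarrow> (\<forall>i<length cs. is_swrite (cs!i) \<longrightarrow>
       (\<exists>w. \<rho> i < w \<and> wait_exits_at ms w \<and> (\<forall>j. i < j \<longrightarrow> j < length cs \<longrightarrow> Suc w < \<rho> j)))) \<and>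
    (tr = FWSR \<longrightarrow> (\<forall>j<length cs. \<not> is_swrite (cs!j) \<longrightarrow>
       (\<exists>w. Suc w < \<rho> j \<and> wait_exits_at ms w \<and> (\<forall>i<j. \<rho> i < w))))"

lemma main_layoutD:
  assumes "main_layout tr Ks p n ms cs \<rho>"
  shows main_layout_mono: "\<And>i j. i < j \<Longrightarrow> j < length cs \<Longrightarrow> \<rho> i < \<rho> j"
    and main_layout_bound: "\<And>i. i < length cs \<Longrightarrow> \<rho> i < length ms"
    and main_layout_read: "\<And>i x v. i < length cs \<Longrightarrow> cs!i = SRead x v \<Longrightarrow> ms!(\<rho> i) = TReadMem x v"
    and main_layout_write: "\<And>i x v. i < length cs \<Longrightarrow> cs!i = SWrite x v \<Longrightarrow>
          2 \<le> \<rho> i \<and> ms!(\<rho> i) = TBcast (Upd p (n + writes_before cs i) x v) (label Ks x) \<and>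
          (\<exists>r. ms!(\<rho> i - 1) = TWriteReq (Suc r) \<and> ms!(\<rho> i - 2) = TReadReq r)"
    and main_layout_reads_covered: "\<And>m x v. m < length ms \<Longrightarrow> ms!m = TReadMem x v \<Longrightarrow> \<exists>i<length cs. \<rho> i = m"
    and main_layout_bcasts_covered: "\<And>m u l. m < length ms \<Longrightarrow> ms!m = TBcast u l \<Longrightarrow> \<exists>i<length cs. \<rho> i = m"
    and main_layout_reqs_covered: "\<And>m k. m < length ms \<Longrightarrow> ms!m = TWriteReq k \<Longrightarrow>
          \<exists>i<length cs. is_swrite (cs!i) \<and> \<rho> i = Suc m"
    and main_layout_main_op: "\<And>m. m < length ms \<Longrightarrow> main_op (ms!m)"
    and main_layout_swfr_wait: "\<And>i. tr = SWFR \<Longrightarrow> i < length cs \<Longrightarrow> is_swrite (cs!i) \<Longrightarrow>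
          \<exists>w. \<rho> i < w \<and> wait_exits_at ms w \<and> (\<forall>j. i < j \<longrightarrow> j < length cs \<longrightarrow> Suc w < \<rho> j)"
    and main_layout_fwsr_wait: "\<And>j. tr = FWSR \<Longrightarrow> j < length cs \<Longrightarrow> \<not> is_swrite (cs!j) \<Longrightarrow>
          \<exists>w. Suc w < \<rho> j \<and> wait_exits_at ms w \<and> (\<forall>i<j. \<rho> i < w)"
  using assms unfolding main_layout_def by simp_all

definition cons_idx :: "nat \<Rightarrow> ('p,'var,'val) top list \<Rightarrow> (nat \<Rightarrow> nat) \<Rightarrow> nat \<Rightarrow> nat" where
  "cons_idx b seg \<rho> i = (if i = 0 then b else length seg + \<rho> (i - 1))"

context
  fixes tr :: transformation and Ks :: "'var set list" and p :: 'p and n b :: nat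
    and c :: "('var,'val) sop" and cs :: "('var,'val) sop list"
    and ms seg :: "('p,'var,'val) top list" and \<rho> :: "nat \<Rightarrow> nat"
  assumes layout: "main_layout tr Ks p (if is_swrite c then Suc n else n) ms cs \<rho>"
    and b: "b < length seg"
    and seg_read: "\<And>x v. c = SRead x v \<Longrightarrow> seg!b = TReadMem x v"
    and seg_write: "\<And>x v. c = SWrite x v \<Longrightarrow> 2 \<le> b \<and> seg!b = TBcast (Upd p n x v) (label Ks x) \<and>
          (\<exists>r. seg!(b - 1) = TWriteReq (Suc r) \<and> seg!(b - 2) = TReadReq r)"
    and seg_ops: "\<And>m. m < length seg \<Longrightarrow> (\<forall>x v. seg!m = TReadMem x v \<longrightarrow> m = b) \<and>
          (\<forall>u l. seg!m = TBcast u l \<longrightarrow> m = b) \<and> (\<forall>k. seg!m = TWriteReq k \<longrightarrow> is_swrite c \<and> Suc m = b) \<and>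
          main_op (seg!m)"
    and seg_swfr_wait: "tr = SWFR \<Longrightarrow> is_swrite c \<Longrightarrow> \<exists>w. b < w \<and> wait_exits_at seg w"
    and seg_fwsr_wait: "tr = FWSR \<Longrightarrow> \<not> is_swrite c \<Longrightarrow> \<exists>w. Suc w < b \<and> wait_exits_at seg w"
begin

private lemma cons_idx_Suc: "cons_idx b seg \<rho> (Suc i) = length seg + \<rho> i"
  by (simp add: cons_idx_def)

private lemma cons_idx_write:
  assumes i: "i < length (c # cs)" and ci: "(c # cs)!i = SWrite x v"
  shows "2 \<le> cons_idx b seg \<rho> i \<and>
    (seg @ ms)!(cons_idx b seg \<rho> i) = TBcast (Upd p (n + writes_before (c # cs) i) x v) (label Ks x) \<and>
    (\<exists>r. (seg @ ms)!(cons_idx b seg \<rho> i - 1) = TWriteReq (Suc r) \<and>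
         (seg @ ms)!(cons_idx b seg \<rho> i - 2) = TReadReq r)"
proof (cases i)
  case 0
  then show ?thesis
    using seg_write ci b by (auto simp: nth_append writes_before_0 cons_idx_def)
next
  case (Suc i')
  then have i': "i' < length cs" "cs!i' = SWrite x v"
    using i ci by auto
  then obtain r where r: "2 \<le> \<rho> i'"
      "ms!(\<rho> i') = TBcast (Upd p ((if is_swrite c then Suc n else n) + writes_before cs i') x v) (label Ks x)"
      "ms!(\<rho> i' - 1) = TWriteReq (Suc r)" "ms!(\<rho> i' - 2) = TReadReq r"
    using main_layout_write[OF layout i'] by blast
  have shift: "(seg @ ms)!(length seg + \<rho> i' - k) = ms!(\<rho> i' - k)" if "k \<le> 2" for k
    using that r(1) nth_append_length_plus[of seg ms "\<rho> i' - k"] by simp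
  show ?thesis
    using Suc r shift[of 0] shift[of 1] shift[of 2]
    by (simp add: cons_idx_Suc writes_before_Cons_Suc)
qed

private lemma cons_idx_covers:
  assumes m: "m < length (seg @ ms)"
  shows "(\<forall>x v. (seg @ ms)!m = TReadMem x v \<longrightarrow> (\<exists>i<length (c # cs). cons_idx b seg \<rho> i = m)) \<and>
    (\<forall>u l. (seg @ ms)!m = TBcast u l \<longrightarrow> (\<exists>i<length (c # cs). cons_idx b seg \<rho> i = m)) \<and>
    (\<forall>k. (seg @ ms)!m = TWriteReq k \<longrightarrow> (\<exists>i<length (c # cs). is_swrite ((c # cs)!i) \<and> cons_idx b seg \<rho> i = Suc m)) \<and>
    main_op ((seg @ ms)!m)"
proof (cases "m < length seg")
  case True
  have "cons_idx b seg \<rho> 0 = b" by (simp add: cons_idx_def)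
  then show ?thesis
    using seg_ops[OF True] True by (auto simp: nth_append)
next
  case False
  define m' where "m' = m - length seg"
  have m': "m = length seg + m'" "m' < length ms" and nth: "(seg @ ms)!m = ms!m'"
    using False m by (auto simp: m'_def nth_append)
  have lift: "\<exists>i<length (c # cs). P ((c # cs)!i) \<and> cons_idx b seg \<rho> i = length seg + k"
    if "i < length cs" "P (cs!i)" "\<rho> i = k" for P i k
    using that by (intro exI[of _ "Suc i"]) (simp add: cons_idx_Suc)
  show ?thesis
    unfolding nth
  proof (intro conjI allI impI)
    fix x v
    assume "ms!m' = TReadMem x v"
    then obtain i where "i < length cs" "\<rho> i = m'"
      using main_layout_reads_covered[OF layout m'(2)] by blast
    then show "\<exists>i<length (c # cs). cons_idx b seg \<rho> i = m"
      using lift[where P = "\<lambda>_. True"] m'(1) by blast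
  next
    fix u l
    assume "ms!m' = TBcast u l"
    then obtain i where "i < length cs" "\<rho> i = m'"
      using main_layout_bcasts_covered[OF layout m'(2)] by blast
    then show "\<exists>i<length (c # cs). cons_idx b seg \<rho> i = m"
      using lift[where P = "\<lambda>_. True"] m'(1) by blast
  next
    fix k
    assume "ms!m' = TWriteReq k"
    then obtain i where "i < length cs" "is_swrite (cs!i)" "\<rho> i = Suc m'"
      using main_layout_reqs_covered[OF layout m'(2)] by blast
    then show "\<exists>i<length (c # cs). is_swrite ((c # cs)!i) \<and> cons_idx b seg \<rho> i = Suc m"
      using lift[where P = is_swrite] m'(1) by fastforce
  next
    show "main_op (ms!m')"
      using main_layout_main_op[OF layout m'(2)] .
  qed
qed

private lemma cons_idx_swfr_wait:
  assumes "tr = SWFR" "i < length (c # cs)" "is_swrite ((c # cs)!i)"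
  shows "\<exists>w. cons_idx b seg \<rho> i < w \<and> wait_exits_at (seg @ ms) w \<and>
    (\<forall>j. i < j \<longrightarrow> j < length (c # cs) \<longrightarrow> Suc w < cons_idx b seg \<rho> j)"
proof (cases i)
  case 0
  with assms seg_swfr_wait obtain w where w: "b < w" "wait_exits_at seg w"
    by auto
  then have "Suc w < length seg"
    unfolding wait_exits_at_def by auto
  then show ?thesis
    using 0 w wait_exits_at_append[OF w(2)] by (intro exI[of _ w]) (auto simp: cons_idx_def)
next
  case (Suc i')
  with assms obtain w where w: "\<rho> i' < w" "wait_exits_at ms w" "\<forall>j. i' < j \<longrightarrow> j < length cs \<longrightarrow> Suc w < \<rho> j"
    using main_layout_swfr_wait[OF layout] by auto
  show ?thesis
  proof (intro exI[of _ "length seg + w"] conjI allI impI)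
    show "cons_idx b seg \<rho> i < length seg + w" using Suc w by (simp add: cons_idx_def)
    show "wait_exits_at (seg @ ms) (length seg + w)" using wait_exits_at_shift[OF w(2)] .
    fix j assume "i < j" "j < length (c # cs)"
    then show "Suc (length seg + w) < cons_idx b seg \<rho> j" using Suc w(3) by (cases j) (auto simp: cons_idx_def)
  qed
qed

private lemma cons_idx_fwsr_wait:
  assumes "tr = FWSR" "j < length (c # cs)" "\<not> is_swrite ((c # cs)!j)"
  shows "\<exists>w. Suc w < cons_idx b seg \<rho> j \<and> wait_exits_at (seg @ ms) w \<and> (\<forall>i<j. cons_idx b seg \<rho> i < w)"
proof (cases j)
  case 0
  with assms seg_fwsr_wait obtain w where w: "Suc w < b" "wait_exits_at seg w"
    by auto
  then show ?thesis
    using 0 wait_exits_at_append[OF w(2)] by (intro exI[of _ w]) (auto simp: cons_idx_def)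
next
  case (Suc j')
  with assms obtain w where w: "Suc w < \<rho> j'" "wait_exits_at ms w" "\<forall>i<j'. \<rho> i < w"
    using main_layout_fwsr_wait[OF layout] by auto
  show ?thesis
  proof (intro exI[of _ "length seg + w"] conjI allI impI)
    show "Suc (length seg + w) < cons_idx b seg \<rho> j" using Suc w by (simp add: cons_idx_def)
    show "wait_exits_at (seg @ ms) (length seg + w)" using wait_exits_at_shift[OF w(2)] .
    fix i assume "i < j"
    then show "cons_idx b seg \<rho> i < length seg + w" using Suc w(3) b by (cases i) (auto simp: cons_idx_def)
  qed
qed

lemma main_layout_Cons: "main_layout tr Ks p n (seg @ ms) (c # cs) (cons_idx b seg \<rho>)"
proof -
  have mono: "\<forall>i j. i < j \<longrightarrow> j < length (c # cs) \<longrightarrow> cons_idx b seg \<rho> i < cons_idx b seg \<rho> j"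
    using main_layout_mono[OF layout] main_layout_bound[OF layout] b
    by (auto simp: cons_idx_def less_Suc_eq_0_disj)
  have bound: "\<forall>i<length (c # cs). cons_idx b seg \<rho> i < length (seg @ ms)"
    using main_layout_bound[OF layout] b by (auto simp: cons_idx_def less_Suc_eq_0_disj)
  have read: "\<forall>i<length (c # cs). \<forall>x v. (c # cs)!i = SRead x v \<longrightarrow> (seg @ ms)!(cons_idx b seg \<rho> i) = TReadMem x v"
    using main_layout_read[OF layout] b seg_read by (auto simp: nth_append cons_idx_def less_Suc_eq_0_disj)
  have write_bcast: "\<forall>i<length (c # cs). \<forall>x v. (c # cs)!i = SWrite x v \<longrightarrow>
      2 \<le> cons_idx b seg \<rho> i \<and>
      (seg @ ms)!(cons_idx b seg \<rho> i) = TBcast (Upd p (n + writes_before (c # cs) i) x v) (label Ks x) \<and>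
      (\<exists>r. (seg @ ms)!(cons_idx b seg \<rho> i - 1) = TWriteReq (Suc r) \<and>
           (seg @ ms)!(cons_idx b seg \<rho> i - 2) = TReadReq r)"
    using cons_idx_write by blast
  have covers: "\<forall>m<length (seg @ ms). \<forall>x v. (seg @ ms)!m = TReadMem x v \<longrightarrow> (\<exists>i<length (c # cs). cons_idx b seg \<rho> i = m)"
      "\<forall>m<length (seg @ ms). \<forall>u l. (seg @ ms)!m = TBcast u l \<longrightarrow> (\<exists>i<length (c # cs). cons_idx b seg \<rho> i = m)"
      "\<forall>m<length (seg @ ms). \<forall>k. (seg @ ms)!m = TWriteReq k \<longrightarrow>
         (\<exists>i<length (c # cs). is_swrite ((c # cs)!i) \<and> cons_idx b seg \<rho> i = Suc m)"
      "\<forall>m<length (seg @ ms). main_op ((seg @ ms)!m)"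
    using cons_idx_covers by blast+
  have waits: "tr = SWFR \<longrightarrow> (\<forall>i<length (c # cs). is_swrite ((c # cs)!i) \<longrightarrow>
         (\<exists>w. cons_idx b seg \<rho> i < w \<and> wait_exits_at (seg @ ms) w \<and>
           (\<forall>j. i < j \<longrightarrow> j < length (c # cs) \<longrightarrow> Suc w < cons_idx b seg \<rho> j)))"
      "tr = FWSR \<longrightarrow> (\<forall>j<length (c # cs). \<not> is_swrite ((c # cs)!j) \<longrightarrow>
         (\<exists>w. Suc w < cons_idx b seg \<rho> j \<and> wait_exits_at (seg @ ms) w \<and> (\<forall>i<j. cons_idx b seg \<rho> i < w)))"
    using cons_idx_swfr_wait cons_idx_fwsr_wait by blast+
  show ?thesis
    unfolding main_layout_def by (intro conjI) (fact mono bound read write_bcast covers waits)+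
qed

end

lemma main_exec_layout: "main_exec tr Ks p n ivs ms cs \<Longrightarrow> \<exists>\<rho>. main_layout tr Ks p n ms cs \<rho>"
proof (induction rule: main_exec.induct)
  case (me_nil tr Ks p n)
  show ?case
    unfolding main_layout_def by simp
next
  case (me_rd_swfr Ks p n ivs ms cs x v)
  then obtain \<rho> where \<rho>: "main_layout SWFR Ks p n ms cs \<rho>"
    by blast
  have "TReadMem x v # ms = [TReadMem x v] @ ms"
    by simp
  also have "\<exists>\<rho>'. main_layout SWFR Ks p n ([TReadMem x v] @ ms) (SRead x v # cs) \<rho>'"
    by (rule exI, rule main_layout_Cons) (use \<rho> in \<open>auto simp: main_op_def\<close>)
  finally show ?case .
next
  case (me_rd_fwsr w Ks p n ivs ms cs x v)
  then obtain \<rho> where \<rho>: "main_layout FWSR Ks p n ms cs \<rho>"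
    by blast
  note wait = wwc_trace_wait[OF me_rd_fwsr(1)]
  let ?seg = "w @ [TReadMem x v]"
  have "w @ TReadMem x v # ms = ?seg @ ms"
    by simp
  also have "\<exists>\<rho>'. main_layout FWSR Ks p n (?seg @ ms) (SRead x v # cs) \<rho>'"
  proof (rule exI, rule main_layout_Cons)
    fix m
    assume "m < length ?seg"
    then show "(\<forall>x' v'. ?seg!m = TReadMem x' v' \<longrightarrow> m = length w) \<and>
        (\<forall>u l. ?seg!m = TBcast u l \<longrightarrow> m = length w) \<and>
        (\<forall>k. ?seg!m = TWriteReq k \<longrightarrow> is_swrite (SRead x v) \<and> Suc m = length w) \<and> main_op (?seg!m)"
      using wait by (cases "m < length w") (auto simp: nth_append main_op_def)
  next
    show "\<exists>w'. Suc w' < length w \<and> wait_exits_at ?seg w'"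
      using wait wait_exits_at_append[of w "length w - 2" "[TReadMem x v]"]
      by (intro exI[of _ "length w - 2"]) auto
  qed (use \<rho> in \<open>auto simp: nth_append\<close>)
  finally show ?case .
next
  case (me_wr_swfr w Ks p n ivs ms cs x v r)
  then obtain \<rho> where \<rho>: "main_layout SWFR Ks p (Suc n) ms cs \<rho>"
    by blast
  note wait = wwc_trace_wait[OF me_wr_swfr(1)]
  let ?bcast = "[TReadReq r, TWriteReq (Suc r), TBcast (Upd p n x v) (label Ks x)]"
  have "\<exists>\<rho>'. main_layout SWFR Ks p n ((?bcast @ w) @ ms) (SWrite x v # cs) \<rho>'"
  proof (rule exI, rule main_layout_Cons)
    fix m
    assume m: "m < length (?bcast @ w)"
    show "(\<forall>x' v'. (?bcast @ w)!m = TReadMem x' v' \<longrightarrow> m = 2) \<and> (\<forall>u l. (?bcast @ w)!m = TBcast u l \<longrightarrow> m = 2) \<and>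
        (\<forall>k. (?bcast @ w)!m = TWriteReq k \<longrightarrow> is_swrite (SWrite x v) \<and> Suc m = 2) \<and> main_op ((?bcast @ w)!m)"
    proof (cases "m < 3")
      case True
      then have "m = 0 \<or> m = 1 \<or> m = 2"
        by arith
      then show ?thesis
        by (elim disjE) (auto simp: main_op_def)
    next
      case False
      then have "m - 3 < length w" "(?bcast @ w)!m = w!(m - 3)"
        using m by (auto simp: nth_append numeral_eq_Suc)
      then show ?thesis
        using wait by (auto simp: main_op_def)
    qed
  next
    show "\<exists>w'. 2 < w' \<and> wait_exits_at (?bcast @ w) w'"
    proof (intro exI conjI)
      show "wait_exits_at (?bcast @ w) (length ?bcast + (length w - 2))"
        using wait_exits_at_shift[of w "length w - 2" ?bcast] wait by blast
    qed simp
  qed (use \<rho> in \<open>auto simp: nth_append\<close>)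
  then show ?case
    by simp
next
  case (me_wr_fwsr Ks p n ivs ms cs x v r)
  then obtain \<rho> where \<rho>: "main_layout FWSR Ks p (Suc n) ms cs \<rho>"
    by blast
  let ?bcast = "[TReadReq r, TWriteReq (Suc r), TBcast (Upd p n x v) (label Ks x)]"
  have "\<exists>\<rho>'. main_layout FWSR Ks p n (?bcast @ ms) (SWrite x v # cs) \<rho>'"
  proof (rule exI, rule main_layout_Cons)
    fix m
    assume "m < length ?bcast"
    then have "m = 0 \<or> m = 1 \<or> m = 2"
      by auto
    then show "(\<forall>x' v'. ?bcast!m = TReadMem x' v' \<longrightarrow> m = 2) \<and> (\<forall>u l. ?bcast!m = TBcast u l \<longrightarrow> m = 2) \<and>
        (\<forall>k. ?bcast!m = TWriteReq k \<longrightarrow> is_swrite (SWrite x v) \<and> Suc m = 2) \<and> main_op (?bcast!m)"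
      by (elim disjE) (auto simp: main_op_def)
  qed (use \<rho> in auto)
  then show ?case
    by simp
qed

lemma label_eq_Some:
  assumes disjoint: "\<forall>i j. i < length Ks \<longrightarrow> j < length Ks \<longrightarrow> i \<noteq> j \<longrightarrow> Ks ! i \<inter> Ks ! j = {}"
    and i: "i < length Ks" "x \<in> Ks ! i"
  shows "label Ks x = Some (Suc i)"
proof -
  have "(SOME i'. i' < length Ks \<and> x \<in> Ks ! i') = i"
    by (rule some_equality) (use disjoint i in blast)+
  with i show ?thesis
    unfolding label_def by auto
qed

section \<open>Runs of the transformed multiprogram satisfying POB\<close>

text \<open>\<open>LT p\<close> is the total order on the target operations of \<open>p\<close> provided by POB;
  \<open>\<rho> p\<close> locates the specified operations of \<open>p\<close> in its main thread.\<close>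

locale pob_run =
  fixes tr :: transformation and Ks :: "'var set list" and init :: "'var \<Rightarrow> 'val"
    and M D :: "'p \<Rightarrow> ('p,'var,'val) top list" and C :: "'p \<Rightarrow> ('var,'val) sop list"
    and \<rho> :: "'p \<Rightarrow> nat \<Rightarrow> nat" and LT :: "'p \<Rightarrow> ('p \<times> thr \<times> nat) list"
  assumes layout: "\<And>p. main_layout tr Ks p 0 (M p) (C p) (\<rho> p)"
    and del_thread_trace: "\<And>p. del_trace p (D p)"
    and order_distinct: "\<And>p. distinct (LT p)"
    and order_set: "\<And>p. set (LT p) = tops_of M D p"
    and order_valid: "\<And>p. tvalid init (map (top_at M D) (LT p))"
    and order_respects: "\<And>p a b. a \<in> set (LT p) \<Longrightarrow> b \<in> set (LT p) \<Longrightarrow>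
          tprog a b \<or> delOrder M D a b \<Longrightarrow> before (LT p) a b"
    and order_agree: "\<And>p q l u1 u2. l \<in> {1..length Ks} \<Longrightarrow>
          del_before M D (LT p) u1 u2 l \<longleftrightarrow> del_before M D (LT q) u1 u2 l"
    and bcast_iff_deliver: "\<And>p u l. (\<exists>a \<in> all_tops M D. top_at M D a = TBcast u l) \<longleftrightarrow>
          (\<exists>a \<in> tops_of M D p. top_at M D a = TDeliver u l)"
begin

lemma top_at_main [simp]: "top_at M D (q, MainT, m) = M q ! m"
  by (simp add: top_at_def tthread_def)

lemma top_at_del [simp]: "top_at M D (q, DelT, m) = D q ! m"
  by (simp add: top_at_def tthread_def)

lemma in_order_main: "(q, MainT, m) \<in> set (LT p) \<longleftrightarrow> q = p \<and> m < length (M p)"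
  using order_set by (auto simp: tops_of_def tthread_def)

lemma in_order_del: "(q, DelT, m) \<in> set (LT p) \<longleftrightarrow> q = p \<and> m < length (D p)"
  using order_set by (auto simp: tops_of_def tthread_def)

lemma in_order_cases:
  "x \<in> set (LT p) \<Longrightarrow> (\<exists>m. x = (p, MainT, m) \<and> m < length (M p)) \<or> (\<exists>d. x = (p, DelT, d) \<and> d < length (D p))"
  using order_set by (cases x) (auto simp: tops_of_def tthread_def split: thr.splits)

lemma all_tops_main: "(q, MainT, m) \<in> all_tops M D \<longleftrightarrow> m < length (M q)"
  by (auto simp: all_tops_def tops_of_def tthread_def)

lemma all_tops_cases:
  "x \<in> all_tops M D \<Longrightarrow> (\<exists>q m. x = (q, MainT, m) \<and> m < length (M q)) \<or> (\<exists>q d. x = (q, DelT, d) \<and> d < length (D q))"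
  by (cases x) (auto simp: all_tops_def tops_of_def tthread_def split: thr.splits)

lemmas del_op_D = del_trace_op[OF del_thread_trace]
  and deliver_D = del_trace_deliver[OF del_thread_trace]
  and write_mem_D = del_trace_write_mem[OF del_thread_trace]
  and write_prc_D = del_trace_write_prc[OF del_thread_trace]

lemma main_op_M: "m < length (M p) \<Longrightarrow> main_op (M p ! m)"
  using main_layout_main_op[OF layout] .

lemma layout_idx_inj: "i1 < length (C p) \<Longrightarrow> i2 < length (C p) \<Longrightarrow> \<rho> p i1 = \<rho> p i2 \<Longrightarrow> i1 = i2"
  using main_layout_mono[OF layout, of i1 i2 p] main_layout_mono[OF layout, of i2 i1 p]
  by (metis less_irrefl nat_neq_iff)

lemma in_order_not_main_op:
  assumes x: "x \<in> set (LT p)" and op: "\<not> main_op (top_at M D x)"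
  obtains d where "x = (p, DelT, d)" "d < length (D p)"
  using in_order_cases[OF x] op main_op_M that by force

lemma in_order_not_del_op:
  assumes x: "x \<in> set (LT p)" and op: "\<not> del_op (top_at M D x)"
  obtains m where "x = (p, MainT, m)" "m < length (M p)"
  using in_order_cases[OF x] op del_op_D that by force

lemma order_thread_before:
  "(p, t, i) \<in> set (LT p) \<Longrightarrow> (p, t, j) \<in> set (LT p) \<Longrightarrow> i < j \<Longrightarrow> before (LT p) (p, t, i) (p, t, j)"
  by (rule order_respects) (auto simp: tprog_def)

lemma order_thread_before_iff:
  assumes "(p, t, i) \<in> set (LT p)" "(p, t, j) \<in> set (LT p)"
  shows "before (LT p) (p, t, i) (p, t, j) \<longleftrightarrow> i < j"
proof
  assume ij: "before (LT p) (p, t, i) (p, t, j)"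
  show "i < j"
  proof (rule ccontr)
    assume "\<not> i < j"
    then have "j < i \<or> j = i"
      by auto
    then show False
      using ij order_thread_before[OF assms(2,1)] before_asym[OF order_distinct ij]
        before_irrefl[OF order_distinct] by auto
  qed
qed (use assms order_thread_before in blast)

text \<open>The update broadcast by the write \<open>w\<close> (meaningless if \<open>w\<close> is a read).\<close>

definition upd_of :: "'p \<times> nat \<Rightarrow> ('p,'var,'val) upd" where
  "upd_of w = (case C (fst w) ! snd w of
      SWrite x v \<Rightarrow> Upd (fst w) (writes_before (C (fst w)) (snd w)) x v
    | SRead x v \<Rightarrow> Upd (fst w) 0 x v)"

definition label_of :: "'p \<times> nat \<Rightarrow> nat option" where
  "label_of w = label Ks (sop_var (sop_at C w))"

lemma in_swrites_iff: "(q, i) \<in> swrites C \<longleftrightarrow> i < length (C q) \<and> is_swrite (C q ! i)"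
  by (simp add: swrites_def)

lemma bcast_of_write:
  assumes "(q, i) \<in> swrites C"
  shows "\<rho> q i < length (M q) \<and> M q ! \<rho> q i = TBcast (upd_of (q, i)) (label_of (q, i))"
proof -
  from assms obtain x v where "i < length (C q)" "C q ! i = SWrite x v"
    by (auto simp: in_swrites_iff is_swrite_iff)
  then show ?thesis
    using main_layout_write[OF layout] main_layout_bound[OF layout]
    by (simp add: upd_of_def label_of_def sop_at_def)
qed

text \<open>Updates identify writes: the update of a write carries the number of earlier writes
  of its process.\<close>

lemma upd_of_inj:
  assumes "w1 \<in> swrites C" "w2 \<in> swrites C" "upd_of w1 = upd_of w2"
  shows "w1 = w2"
proof -
  obtain q1 i1 q2 i2 where w: "w1 = (q1, i1)" "w2 = (q2, i2)"
    by (cases w1, cases w2)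
  with assms obtain x1 v1 x2 v2 where c: "i1 < length (C q1)" "C q1 ! i1 = SWrite x1 v1"
      "i2 < length (C q2)" "C q2 ! i2 = SWrite x2 v2"
    by (auto simp: in_swrites_iff is_swrite_iff)
  with assms w have q: "q1 = q2" and n: "writes_before (C q1) i1 = writes_before (C q1) i2"
    by (auto simp: upd_of_def)
  have "i1 = i2"
  proof (rule linorder_cases[of i1 i2])
    assume "i1 < i2"
    then show ?thesis
      using writes_before_strict_mono[of i1 i2 "C q1"] c q n by simp
  next
    assume "i2 < i1"
    then show ?thesis
      using writes_before_strict_mono[of i2 i1 "C q1"] c q n by simp
  qed
  with q w show ?thesis
    by simp
qed

lemma bcast_is_write:
  assumes a: "a \<in> all_tops M D" "top_at M D a = TBcast u l"
  shows "\<exists>w \<in> swrites C. u = upd_of w \<and> l = label_of w"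
proof -
  obtain q m where qm: "a = (q, MainT, m)" "m < length (M q)"
    using all_tops_cases[OF a(1)] a(2) del_op_D by (fastforce simp: del_op_def)
  then obtain i where i: "i < length (C q)" "\<rho> q i = m"
    using main_layout_bcasts_covered[OF layout] a(2) by fastforce
  then have "(q, i) \<in> swrites C"
    using main_layout_read[OF layout i(1)] qm a(2) by (cases "C q ! i") (auto simp: in_swrites_iff)
  then show ?thesis
    using bcast_of_write qm i a(2) by fastforce
qed

lemma deliver_is_write:
  assumes "d < length (D p)" "D p ! d = TDeliver u l"
  shows "\<exists>w \<in> swrites C. u = upd_of w \<and> l = label_of w"
proof -
  have "\<exists>a \<in> tops_of M D p. top_at M D a = TDeliver u l"
    using assms in_order_del order_set by (metis top_at_del)
  then show ?thesis
    using bcast_iff_deliver bcast_is_write by blast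
qed

lemma write_delivered:
  assumes "w \<in> swrites C"
  shows "\<exists>d < length (D p). D p ! d = TDeliver (upd_of w) (label_of w)"
proof -
  obtain q i where w: "w = (q, i)"
    by (cases w)
  then have "(q, MainT, \<rho> q i) \<in> all_tops M D" "top_at M D (q, MainT, \<rho> q i) = TBcast (upd_of w) (label_of w)"
    using bcast_of_write assms all_tops_main by auto
  then obtain a where a: "a \<in> set (LT p)" "top_at M D a = TDeliver (upd_of w) (label_of w)"
    using bcast_iff_deliver order_set by blast
  moreover have "\<not> main_op (top_at M D a)"
    using a(2) by (simp add: main_op_def)
  ultimately show ?thesis
    using in_order_not_main_op by (metis top_at_del)
qed

lemma order_deliver_unique:
  assumes "x \<in> set (LT p)" "y \<in> set (LT p)" "top_at M D x = TDeliver u l" "top_at M D y = TDeliver u l"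
  shows "x = y"
proof -
  obtain j k where jk: "j < length (LT p)" "LT p ! j = x" "k < length (LT p)" "LT p ! k = y"
    using assms by (auto simp: in_set_conv_nth)
  then have "j = k"
    using order_valid[of p] assms unfolding tvalid_def by auto
  with jk show ?thesis
    by simp
qed

lemma order_bcast_before_deliver:
  assumes "x \<in> set (LT p)" "y \<in> set (LT p)" "top_at M D x = TBcast u l" "top_at M D y = TDeliver u l"
  shows "before (LT p) x y"
proof -
  obtain j k where jk: "j < length (LT p)" "LT p ! j = x" "k < length (LT p)" "LT p ! k = y"
    using assms by (auto simp: in_set_conv_nth)
  then have "j < k"
    using order_valid[of p] assms unfolding tvalid_def by auto
  with jk show ?thesis
    unfolding before_def by blast
qed

lemma del_thread_deliver_unique:
  assumes "d1 < length (D p)" "d2 < length (D p)" "D p ! d1 = TDeliver u l1" "D p ! d2 = TDeliver u l2"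
  shows "d1 = d2 \<and> l1 = l2"
proof -
  obtain w1 w2 where "w1 \<in> swrites C" "u = upd_of w1" "l1 = label_of w1"
      "w2 \<in> swrites C" "u = upd_of w2" "l2 = label_of w2"
    using deliver_is_write assms by metis
  then have l: "l1 = l2"
    using upd_of_inj by metis
  have "(p, DelT, d1) = (p, DelT, d2)"
    by (rule order_deliver_unique[of _ p _ u l1]) (use assms l in_order_del in auto)
  with l show ?thesis
    by simp
qed

definition del_idx :: "'p \<Rightarrow> 'p \<times> nat \<Rightarrow> nat" where
  "del_idx p w = (THE d. d < length (D p) \<and> D p ! d = TDeliver (upd_of w) (label_of w))"

lemma del_idx_deliver:
  assumes "w \<in> swrites C"
  shows "del_idx p w < length (D p) \<and> D p ! del_idx p w = TDeliver (upd_of w) (label_of w)"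
proof -
  obtain d where d: "d < length (D p)" "D p ! d = TDeliver (upd_of w) (label_of w)"
    using write_delivered[OF assms] by blast
  then have "del_idx p w = d"
    unfolding del_idx_def using del_thread_deliver_unique[of _ p d] by blast
  with d show ?thesis
    by simp
qed

lemma del_idx_unique:
  "w \<in> swrites C \<Longrightarrow> d < length (D p) \<Longrightarrow> D p ! d = TDeliver (upd_of w) l \<Longrightarrow> d = del_idx p w \<and> l = label_of w"
  using del_idx_deliver[of w p] del_thread_deliver_unique[of d p "del_idx p w"] by metis

definition write_of :: "('p,'var,'val) upd \<Rightarrow> 'p \<times> nat" where
  "write_of u = (THE w. w \<in> swrites C \<and> upd_of w = u)"

lemma write_of_upd_of: "w \<in> swrites C \<Longrightarrow> write_of (upd_of w) = w"
  unfolding write_of_def by (rule the_equality) (auto intro: upd_of_inj)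

lemma upd_of_source: "upd_of w = Upd s n x v \<Longrightarrow> s = fst w"
  by (auto simp: upd_of_def split: sop.splits)

lemma upd_of_sop: "w \<in> swrites C \<Longrightarrow> upd_of w = Upd s n x v \<Longrightarrow> sop_at C w = SWrite x v"
  by (cases w) (auto simp: upd_of_def sop_at_def in_swrites_iff is_swrite_iff)

abbreviation top_seq :: "'p \<Rightarrow> ('p,'var,'val) top list" where
  "top_seq p \<equiv> map (top_at M D) (LT p)"

lemma in_order_thread_le: "(p, t, e) \<in> set (LT p) \<Longrightarrow> e' \<le> e \<Longrightarrow> (p, t, e') \<in> set (LT p)"
  using order_set by (auto simp: tops_of_def)

lemma thread_counter_eq_card:
  assumes rd_or_wr: "\<And>op. rd op = None \<or> wr op = None"
    and reads: "\<And>j r. j < length (LT p) \<Longrightarrow> rd (top_seq p ! j) = Some r \<Longrightarrow>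
        r = counter_after wr (take j (top_seq p))"
    and increments: "\<And>e v. (p, t, e) \<in> set (LT p) \<Longrightarrow> wr (top_at M D (p, t, e)) = Some v \<Longrightarrow>
        0 < e \<and> (\<exists>r. rd (top_at M D (p, t, e - 1)) = Some r \<and> v = Suc r)"
    and in_thread: "\<And>x. x \<in> set (LT p) \<Longrightarrow> wr (top_at M D x) \<noteq> None \<Longrightarrow> \<exists>e. x = (p, t, e)"
    and k: "k < length (LT p)"
  shows "counter_after wr (take k (top_seq p)) = card {y. before (LT p) y (LT p ! k) \<and> wr (top_at M D y) \<noteq> None}"
proof -
  have "\<exists>j<k. \<exists>r. rd (top_seq p ! j) = Some r \<and> v = Suc r \<and>
      (\<forall>q. j \<le> q \<longrightarrow> q < k \<longrightarrow> wr (top_seq p ! q) = None)"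
    if k: "k < length (top_seq p)" and v: "wr (top_seq p ! k) = Some v" for k v
  proof -
    obtain e where e: "LT p ! k = (p, t, e)"
      using in_thread[of "LT p ! k"] k v by auto
    have e_in: "(p, t, e) \<in> set (LT p)"
      using k e by (metis length_map nth_mem)
    then obtain r where r: "0 < e" "rd (top_at M D (p, t, e - 1)) = Some r" "v = Suc r"
      using increments v k e by fastforce
    have "(p, t, e - 1) \<in> set (LT p)"
      using in_order_thread_le[OF e_in] by simp
    then obtain j where j: "j < length (LT p)" "LT p ! j = (p, t, e - 1)"
      by (auto simp: in_set_conv_nth)
    have "before (LT p) (LT p ! j) (LT p ! k)"
      using order_thread_before[of p t "e - 1" e] j e e_in r(1) by (metis diff_less nth_mem zero_less_one)
    then have jk: "j < k"
      using before_nth_iff[OF order_distinct j(1)] k by simp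
    have "wr (top_seq p ! q) = None" if q: "j \<le> q" "q < k" for q
    proof (rule ccontr)
      assume "wr (top_seq p ! q) \<noteq> None"
      then obtain e' where e': "LT p ! q = (p, t, e')"
        using in_thread[of "LT p ! q"] q k by fastforce
      have q_in: "(p, t, e') \<in> set (LT p)"
        using q k e' by (metis length_map less_trans nth_mem)
      have "q \<noteq> j"
        using \<open>wr (top_seq p ! q) \<noteq> None\<close> rd_or_wr j r(2) by (metis nth_map option.distinct(1))
      then have "before (LT p) (LT p ! j) (LT p ! q)" "before (LT p) (LT p ! q) (LT p ! k)"
        using before_nth_iff[OF order_distinct] j(1) q k by auto
      then have "e - 1 < e'" "e' < e"
        using order_thread_before_iff q_in e_in j e e' \<open>(p, t, e - 1) \<in> set (LT p)\<close> by auto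
      then show False
        by linarith
    qed
    then show ?thesis
      using jk j r by auto
  qed
  then have "counter_after wr (take k (top_seq p)) = card {q. q < k \<and> wr (top_seq p ! q) \<noteq> None}"
    using counter_after_eq_card[of "top_seq p" rd wr k] reads k by auto
  also have "\<dots> = card {q. q < k \<and> wr (top_at M D (LT p ! q)) \<noteq> None}"
    using k by (intro arg_cong[where f = card]) auto
  finally show ?thesis
    using card_indices_before[OF order_distinct k] by simp
qed

lemma req_read_eq_card:
  assumes x: "(p, MainT, m) \<in> set (LT p)" and read: "M p ! m = TReadReq c"
  shows "c = card {y. before (LT p) y (p, MainT, m) \<and> req_write (top_at M D y) \<noteq> None}"
proof -
  obtain k where k: "k < length (LT p)" "LT p ! k = (p, MainT, m)"
    using x by (auto simp: in_set_conv_nth)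
  have reads: "r = counter_after req_write (take j (top_seq p))"
    if "j < length (LT p)" "req_read (top_seq p ! j) = Some r" for j r
    using that order_valid[of p] unfolding tvalid_def req_after_eq_counter_after
    by (auto simp: req_read_def split: top.splits)
  have increments: "0 < e \<and> (\<exists>r. req_read (top_at M D (p, MainT, e - 1)) = Some r \<and> v = Suc r)"
    if "(p, MainT, e) \<in> set (LT p)" "req_write (top_at M D (p, MainT, e)) = Some v" for e v
  proof -
    have e: "e < length (M p)" "M p ! e = TWriteReq v"
      using that in_order_main by (auto simp: req_write_def split: top.splits)
    then obtain i where i: "i < length (C p)" "is_swrite (C p ! i)" "\<rho> p i = Suc e"
      using main_layout_reqs_covered[OF layout] by blast
    then obtain x' v' where "C p ! i = SWrite x' v'"
      by (auto simp: is_swrite_iff)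
    then show ?thesis
      using main_layout_write[OF layout i(1)] i(3) e(2) by (auto simp: req_read_def numeral_eq_Suc)
  qed
  have in_thread: "\<exists>e. y = (p, MainT, e)" if "y \<in> set (LT p)" "req_write (top_at M D y) \<noteq> None" for y
    using that in_order_not_del_op[of y p] by (auto simp: req_write_def del_op_def split: top.splits)
  have "c = req_after (take k (top_seq p))"
    using order_valid[of p] k read unfolding tvalid_def by auto
  then show ?thesis
    using thread_counter_eq_card[OF _ reads increments in_thread k(1)] k(2)
    by (simp add: req_after_eq_counter_after req_read_def req_write_def split: top.split)
qed

lemma prc_read_eq_card:
  assumes x: "x \<in> set (LT p)" and read: "top_at M D x = TReadPrc a"
  shows "a = card {y. before (LT p) y x \<and> prc_write (top_at M D y) \<noteq> None}"
proof -
  obtain k where k: "k < length (LT p)" "LT p ! k = x"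
    using x by (auto simp: in_set_conv_nth)
  have reads: "r = counter_after prc_write (take j (top_seq p))"
    if "j < length (LT p)" "prc_read (top_seq p ! j) = Some r" for j r
    using that order_valid[of p] unfolding tvalid_def prc_after_eq_counter_after
    by (auto simp: prc_read_def split: top.splits)
  have increments: "0 < e \<and> (\<exists>r. prc_read (top_at M D (p, DelT, e - 1)) = Some r \<and> v = Suc r)"
    if "(p, DelT, e) \<in> set (LT p)" "prc_write (top_at M D (p, DelT, e)) = Some v" for e v
    using that in_order_del write_prc_D[of e p v] by (auto simp: prc_write_def prc_read_def split: top.splits)
  have in_thread: "\<exists>e. y = (p, DelT, e)" if "y \<in> set (LT p)" "prc_write (top_at M D y) \<noteq> None" for y
    using that in_order_not_main_op[of y p] by (auto simp: prc_write_def main_op_def split: top.splits)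
  have "a = prc_after (take k (top_seq p))"
    using order_valid[of p] k read unfolding tvalid_def by auto
  then show ?thesis
    using thread_counter_eq_card[OF _ reads increments in_thread k(1)] k(2)
    by (simp add: prc_after_eq_counter_after prc_read_def prc_write_def split: top.split)
qed

lemma wait_between_write_read:
  assumes "i < j" "j < length (C p)" "is_swrite (C p ! i)" "\<not> is_swrite (C p ! j)"
  shows "\<exists>w. \<rho> p i < w \<and> Suc w < \<rho> p j \<and> wait_exits_at (M p) w"
proof (cases tr)
  case SWFR
  then obtain w where "\<rho> p i < w" "wait_exits_at (M p) w" "\<forall>j'. i < j' \<longrightarrow> j' < length (C p) \<longrightarrow> Suc w < \<rho> p j'"
    using main_layout_swfr_wait[OF layout[of p] SWFR, of i] assms by auto
  then show ?thesis
    using assms by blast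
next
  case FWSR
  then obtain w where "Suc w < \<rho> p j" "wait_exits_at (M p) w" "\<forall>i'<j. \<rho> p i' < w"
    using main_layout_fwsr_wait[OF layout[of p] FWSR, of j] assms by auto
  then show ?thesis
    using assms by blast
qed

definition own_writes_before :: "'p \<Rightarrow> nat \<Rightarrow> nat set" where
  "own_writes_before p w = {i. i < length (C p) \<and> is_swrite (C p ! i) \<and> \<rho> p i < w}"

lemma write_request_before_bcast:
  assumes "i < length (C p)" "is_swrite (C p ! i)"
  shows "2 \<le> \<rho> p i \<and> M p ! \<rho> p i = TBcast (upd_of (p, i)) (label_of (p, i)) \<and>
    (\<exists>r. M p ! (\<rho> p i - 1) = TWriteReq (Suc r))"
  using assms main_layout_write[OF layout] bcast_of_write[of p i] by (fastforce simp: is_swrite_iff in_swrites_iff)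

lemma requests_before_wait:
  assumes wait: "wait_exits_at (M p) w"
  shows "{y. before (LT p) y (p, MainT, Suc w) \<and> req_write (top_at M D y) \<noteq> None} =
    (\<lambda>i. (p, MainT, \<rho> p i - 1)) ` own_writes_before p w"
proof -
  obtain a c where w: "Suc w < length (M p)" "M p ! w = TReadPrc a" "M p ! Suc w = TReadReq c"
    using wait unfolding wait_exits_at_def by blast
  show ?thesis
  proof (intro set_eqI iffI)
    fix y
    assume "y \<in> {y. before (LT p) y (p, MainT, Suc w) \<and> req_write (top_at M D y) \<noteq> None}"
    then have y: "before (LT p) y (p, MainT, Suc w)" "req_write (top_at M D y) \<noteq> None"
      by auto
    then have y_in: "y \<in> set (LT p)"
      using before_in_set[OF y(1)] by simp
    have "\<not> del_op (top_at M D y)"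
      using y(2) by (auto simp: req_write_def del_op_def split: top.splits)
    then obtain m where m: "y = (p, MainT, m)" "m < length (M p)"
      using in_order_not_del_op[OF y_in] by blast
    then obtain k where "M p ! m = TWriteReq k"
      using y(2) by (auto simp: req_write_def split: top.splits)
    then obtain i where i: "i < length (C p)" "is_swrite (C p ! i)" "\<rho> p i = Suc m"
      using main_layout_reqs_covered[OF layout m(2)] by blast
    have "m < Suc w"
      using order_thread_before_iff[of p MainT m "Suc w"] y_in y(1) m w(1) in_order_main by auto
    moreover have "\<rho> p i \<noteq> w" "\<rho> p i \<noteq> Suc w"
      using write_request_before_bcast[OF i(1,2)] w by auto
    ultimately show "y \<in> (\<lambda>i. (p, MainT, \<rho> p i - 1)) ` own_writes_before p w"
      unfolding own_writes_before_def using i m by (intro image_eqI[of _ _ i]) auto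
  next
    fix y
    assume "y \<in> (\<lambda>i. (p, MainT, \<rho> p i - 1)) ` own_writes_before p w"
    then obtain i where i: "i < length (C p)" "is_swrite (C p ! i)" "\<rho> p i < w" and y: "y = (p, MainT, \<rho> p i - 1)"
      unfolding own_writes_before_def by blast
    have "before (LT p) y (p, MainT, Suc w)"
      using order_thread_before[of p MainT "\<rho> p i - 1" "Suc w"] y i w(1) in_order_main by auto
    then show "y \<in> {y. before (LT p) y (p, MainT, Suc w) \<and> req_write (top_at M D y) \<noteq> None}"
      using y write_request_before_bcast[OF i(1,2)] by (auto simp: req_write_def)
  qed
qed

lemma card_requests_before_wait:
  assumes "wait_exits_at (M p) w"
  shows "card {y. before (LT p) y (p, MainT, Suc w) \<and> req_write (top_at M D y) \<noteq> None} =
    card (own_writes_before p w)"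
proof -
  have "inj_on (\<lambda>i. (p, MainT, \<rho> p i - 1)) (own_writes_before p w)"
  proof (rule inj_onI)
    fix i1 i2
    assume i: "i1 \<in> own_writes_before p w" "i2 \<in> own_writes_before p w"
      and eq: "(p, MainT, \<rho> p i1 - 1) = (p, MainT, \<rho> p i2 - 1)"
    have "2 \<le> \<rho> p i1" "2 \<le> \<rho> p i2"
      using i write_request_before_bcast unfolding own_writes_before_def by auto
    with eq have "\<rho> p i1 = \<rho> p i2"
      by simp
    with i show "i1 = i2"
      using layout_idx_inj unfolding own_writes_before_def by blast
  qed
  then show ?thesis
    using requests_before_wait[OF assms] by (simp add: card_image)
qed

lemma processed_mark:
  assumes y: "y \<in> set (LT p)" "prc_write (top_at M D y) \<noteq> None"
  obtains i where "(p, i) \<in> swrites C" "y = (p, DelT, del_idx p (p, i) + 3)"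
proof -
  have "\<not> main_op (top_at M D y)"
    using y(2) by (auto simp: prc_write_def main_op_def split: top.splits)
  then obtain d where d: "y = (p, DelT, d)" "d < length (D p)"
    using in_order_not_main_op[OF y(1)] by blast
  then obtain k where "D p ! d = TWritePrc k"
    using y(2) by (auto simp: prc_write_def split: top.splits)
  then obtain n x v l where d3: "3 \<le> d" "D p ! (d - 3) = TDeliver (Upd p n x v) l"
    using write_prc_D[OF d(2)] by blast
  moreover have "d - 3 < length (D p)"
    using d(2) by simp
  ultimately obtain w where w: "w \<in> swrites C" "Upd p n x v = upd_of w" "l = label_of w"
    using deliver_is_write by blast
  obtain i where wi: "w = (p, i)"
    using upd_of_source[of w p n x v] w(2) by (cases w) auto
  have "d - 3 = del_idx p w"
    using del_idx_unique[OF w(1), of "d - 3" p l] d(2) d3(2) w(2) by simp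
  then show thesis
    using that w(1) wi d d3(1) by simp
qed

lemma own_writes_processed_before_wait:
  assumes wait: "wait_exits_at (M p) w" and i: "i \<in> own_writes_before p w"
  shows "before (LT p) (p, DelT, del_idx p (p, i) + 3) (p, MainT, w)"
proof -
  obtain a c where w: "Suc w < length (M p)" "M p ! w = TReadPrc a" "M p ! Suc w = TReadReq c" "c \<le> a"
    using wait unfolding wait_exits_at_def by blast
  define mark where "mark i = (p, DelT, del_idx p (p, i) + 3)" for i
  define processed where "processed = {y. before (LT p) y (p, MainT, w) \<and> prc_write (top_at M D y) \<noteq> None}"
  have "a = card processed"
    unfolding processed_def using prc_read_eq_card[of "(p, MainT, w)" p a] w in_order_main by auto
  moreover have "c = card (own_writes_before p w)"
    using req_read_eq_card[of p "Suc w" c] card_requests_before_wait[OF wait] w in_order_main by auto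
  moreover have sub: "processed \<subseteq> mark ` own_writes_before p w"
  proof
    fix y
    assume "y \<in> processed"
    then have y: "before (LT p) y (p, MainT, w)" "prc_write (top_at M D y) \<noteq> None"
      unfolding processed_def by auto
    obtain i where i: "(p, i) \<in> swrites C" "y = mark i"
      using processed_mark[OF before_in_set[OF y(1), THEN conjunct1] y(2)] unfolding mark_def by blast
    note bcast = bcast_of_write[OF i(1)] and deliver = del_idx_deliver[OF i(1), of p]
    have in_order: "(p, MainT, \<rho> p i) \<in> set (LT p)" "(p, DelT, del_idx p (p, i)) \<in> set (LT p)" "y \<in> set (LT p)"
      using bcast deliver before_in_set[OF y(1)] in_order_main in_order_del by auto
    have "before (LT p) (p, MainT, \<rho> p i) (p, DelT, del_idx p (p, i))"
      using order_bcast_before_deliver[OF in_order(1,2)] bcast deliver by simp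
    moreover have "before (LT p) (p, DelT, del_idx p (p, i)) y"
      using order_thread_before[OF in_order(2)] in_order(3) i(2) unfolding mark_def by simp
    ultimately have "before (LT p) (p, MainT, \<rho> p i) (p, MainT, w)"
      using y(1) before_trans[OF order_distinct] by blast
    then have "\<rho> p i < w"
      using order_thread_before_iff in_order(1) w(1) in_order_main by auto
    then show "y \<in> mark ` own_writes_before p w"
      using i unfolding own_writes_before_def by (auto simp: in_swrites_iff)
  qed
  moreover have "finite (own_writes_before p w)"
    unfolding own_writes_before_def by simp
  ultimately have "card (mark ` own_writes_before p w) \<le> card processed"
    using w(4) card_image_le[of "own_writes_before p w" mark] by linarith
  then have "processed = mark ` own_writes_before p w"
    using card_seteq[OF finite_imageI sub] \<open>finite (own_writes_before p w)\<close> by blast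
  then show ?thesis
    using i unfolding processed_def mark_def by blast
qed

lemma own_write_applied_before_read:
  assumes "i < j" "j < length (C p)" "is_swrite (C p ! i)" "\<not> is_swrite (C p ! j)"
  shows "Suc (del_idx p (p, i)) < length (D p) \<and>
    before (LT p) (p, DelT, Suc (del_idx p (p, i))) (p, MainT, \<rho> p j)"
proof -
  obtain w where w: "\<rho> p i < w" "Suc w < \<rho> p j" "wait_exits_at (M p) w"
    using wait_between_write_read[OF assms] by blast
  have "i \<in> own_writes_before p w"
    using assms w unfolding own_writes_before_def by simp
  then have mark: "before (LT p) (p, DelT, del_idx p (p, i) + 3) (p, MainT, w)"
    using own_writes_processed_before_wait[OF w(3)] by blast
  then have mark_in: "(p, DelT, del_idx p (p, i) + 3) \<in> set (LT p)" and w_in: "(p, MainT, w) \<in> set (LT p)"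
    using before_in_set[OF mark] by simp_all
  have applied_in: "(p, DelT, Suc (del_idx p (p, i))) \<in> set (LT p)"
    using in_order_thread_le[OF mark_in] by simp
  have j_in: "(p, MainT, \<rho> p j) \<in> set (LT p)"
    using main_layout_bound[OF layout assms(2)] in_order_main by simp
  have "before (LT p) (p, DelT, Suc (del_idx p (p, i))) (p, DelT, del_idx p (p, i) + 3)"
    using order_thread_before[OF applied_in mark_in] by simp
  moreover have "before (LT p) (p, MainT, w) (p, MainT, \<rho> p j)"
    using order_thread_before[OF w_in j_in] w(2) by simp
  ultimately have "before (LT p) (p, DelT, Suc (del_idx p (p, i))) (p, MainT, \<rho> p j)"
    using mark before_trans[OF order_distinct] by blast
  then show ?thesis
    using applied_in in_order_del by blast
qed

subsection \<open>The view of a process\<close>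

text \<open>The view of \<open>p\<close> lists the accesses of \<open>p\<close> to its replica in the order \<open>LT p\<close>: a read of
  the replica stands for the specified read it implements, an update of the replica for the
  write whose update it applies.  A write whose update was delivered last, but not yet
  applied when the delivery thread stopped, is appended at the end.\<close>

definition mem_access :: "'p \<times> thr \<times> nat \<Rightarrow> bool" where
  "mem_access x = (case top_at M D x of TReadMem _ _ \<Rightarrow> True | TWriteMem _ _ \<Rightarrow> True | _ \<Rightarrow> False)"

definition spec_op :: "'p \<Rightarrow> 'p \<times> thr \<times> nat \<Rightarrow> 'p \<times> nat" where
  "spec_op p x = (case x of (q, t, m) \<Rightarrow> (case t of
      MainT \<Rightarrow> (p, THE i. i < length (C p) \<and> \<rho> p i = m)
    | DelT \<Rightarrow> write_of (deliver_upd (D p ! (m - 1)))))"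

definition pending_write :: "'p \<Rightarrow> ('p \<times> nat) list" where
  "pending_write p = (if D p \<noteq> [] \<and> (\<exists>u l. last (D p) = TDeliver u l)
     then [write_of (deliver_upd (last (D p)))] else [])"

definition spec_order :: "'p \<Rightarrow> ('p \<times> nat) list" where
  "spec_order p = map (spec_op p) (filter mem_access (LT p)) @ pending_write p"

lemma spec_op_read:
  assumes "i < length (C p)" "C p ! i = SRead a b"
  shows "(p, MainT, \<rho> p i) \<in> set (LT p) \<and> mem_access (p, MainT, \<rho> p i) \<and> spec_op p (p, MainT, \<rho> p i) = (p, i)"
proof -
  have "(THE i'. i' < length (C p) \<and> \<rho> p i' = \<rho> p i) = i"
    by (rule the_equality) (use assms layout_idx_inj in auto)
  then show ?thesis
    using main_layout_read[OF layout assms] main_layout_bound[OF layout assms(1)] in_order_main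
    by (simp add: mem_access_def spec_op_def)
qed

lemma spec_op_applied:
  assumes w: "w \<in> swrites C" and d: "Suc (del_idx p w) < length (D p)"
  shows "(p, DelT, Suc (del_idx p w)) \<in> set (LT p) \<and> mem_access (p, DelT, Suc (del_idx p w)) \<and>
    spec_op p (p, DelT, Suc (del_idx p w)) = w"
proof -
  note deliver = del_idx_deliver[OF w, of p]
  obtain s n x v where "D p ! Suc (del_idx p w) = TWriteMem x v"
    using deliver_D[OF conjunct1[OF deliver] conjunct2[OF deliver] d] by blast
  then show ?thesis
    using d deliver in_order_del write_of_upd_of[OF w] by (simp add: mem_access_def spec_op_def deliver_upd_def)
qed

lemma mem_access_cases:
  assumes x: "x \<in> set (LT p)" and access: "mem_access x"
  obtains (read) i a b where "x = (p, MainT, \<rho> p i)" "i < length (C p)" "C p ! i = SRead a b" "spec_op p x = (p, i)"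
  | (applied) w where "x = (p, DelT, Suc (del_idx p w))" "w \<in> swrites C" "spec_op p x = w"
proof (cases "top_at M D x")
  case (TReadMem a b)
  then obtain m where m: "x = (p, MainT, m)" "m < length (M p)"
    using in_order_not_del_op[OF x] by (auto simp: del_op_def)
  then obtain i where i: "i < length (C p)" "\<rho> p i = m"
    using main_layout_reads_covered[OF layout] TReadMem by fastforce
  have "C p ! i = SRead a b"
    using main_layout_read[OF layout i(1)] main_layout_write[OF layout i(1)] i(2) m TReadMem
    by (cases "C p ! i") auto
  then show thesis
    using read spec_op_read[OF i(1)] i m by blast
next
  case (TWriteMem a b)
  then obtain e where e: "x = (p, DelT, e)" "e < length (D p)"
    using in_order_not_main_op[OF x] by (auto simp: main_op_def)
  then obtain s n l where deliver: "0 < e" "D p ! (e - 1) = TDeliver (Upd s n a b) l"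
    using write_mem_D TWriteMem by fastforce
  moreover have "e - 1 < length (D p)"
    using e by simp
  ultimately obtain w where w: "w \<in> swrites C" "Upd s n a b = upd_of w" "l = label_of w"
    using deliver_is_write by blast
  then have "e - 1 = del_idx p w"
    using del_idx_unique[OF w(1), of "e - 1" p l] deliver e by simp
  then have e': "e = Suc (del_idx p w)"
    using deliver(1) by simp
  show thesis
    by (rule applied[of w]) (use e e' w(1) spec_op_applied[OF w(1), of p] in auto)
qed (use access in \<open>simp_all add: mem_access_def\<close>)

lemma pending_writeD:
  assumes "pending_write p = [w]"
  shows "w \<in> swrites C \<and> Suc (del_idx p w) = length (D p)"
proof -
  from assms obtain u l where ne: "D p \<noteq> []" and last: "last (D p) = TDeliver u l"
      and w: "w = write_of (deliver_upd (last (D p)))"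
    unfolding pending_write_def by (auto split: if_splits)
  then have last': "length (D p) - 1 < length (D p)" "D p ! (length (D p) - 1) = TDeliver u l"
    by (auto simp: last_conv_nth)
  then obtain w' where w': "w' \<in> swrites C" "u = upd_of w'" "l = label_of w'"
    using deliver_is_write by blast
  then have "w = w'"
    using w last write_of_upd_of by (simp add: deliver_upd_def)
  moreover have "length (D p) - 1 = del_idx p w'"
    using del_idx_unique[OF w'(1) last'(1)] last'(2) w'(2) by simp
  then have "Suc (del_idx p w') = length (D p)"
    using ne by (cases "D p") auto
  ultimately show ?thesis
    using w'(1) by simp
qed

lemma pending_writeI:
  assumes w: "w \<in> swrites C" and last: "Suc (del_idx p w) = length (D p)"
  shows "pending_write p = [w]"
proof -
  have "D p \<noteq> []"
    using last by auto
  moreover have "length (D p) - 1 = del_idx p w"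
    using last by simp
  ultimately have "D p \<noteq> []" "last (D p) = D p ! del_idx p w"
    by (auto simp: last_conv_nth)
  then show ?thesis
    unfolding pending_write_def using del_idx_deliver[OF w] write_of_upd_of[OF w]
    by (simp add: deliver_upd_def)
qed

lemma pending_write_cases: "pending_write p = [] \<or> (\<exists>w. pending_write p = [w])"
  unfolding pending_write_def by auto

definition view_pos :: "'p \<Rightarrow> 'p \<times> nat \<Rightarrow> 'p \<times> thr \<times> nat" where
  "view_pos p w = (if w \<in> swrites C then (p, DelT, Suc (del_idx p w)) else (p, MainT, \<rho> p (snd w)))"

lemma view_pos_spec_op:
  assumes "x \<in> set (LT p)" "mem_access x"
  shows "view_pos p (spec_op p x) = x"
  using assms
proof (cases rule: mem_access_cases)
  case (read i a b)
  then have "view_pos p (p, i) = (p, MainT, \<rho> p i)"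
    by (simp add: view_pos_def in_swrites_iff)
  then show ?thesis
    unfolding read(4) using read(1) by (rule trans[OF _ sym])
next
  case (applied w)
  then have "view_pos p w = (p, DelT, Suc (del_idx p w))"
    by (simp add: view_pos_def)
  then show ?thesis
    unfolding applied(3) using applied(1) by (rule trans[OF _ sym])
qed

lemma spec_op_inj: "inj_on (spec_op p) (set (filter mem_access (LT p)))"
  by (rule inj_on_inverseI[where g = "view_pos p"]) (use view_pos_spec_op in auto)

lemma distinct_spec_order: "distinct (spec_order p)"
proof -
  have views: "distinct (map (spec_op p) (filter mem_access (LT p)))"
    using spec_op_inj order_distinct by (simp add: distinct_map)
  consider "pending_write p = []" | w where "pending_write p = [w]"
    using pending_write_cases by blast
  then show ?thesis
  proof cases
    case 1
    then show ?thesis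
      using views unfolding spec_order_def by simp
  next
    case (2 w)
    have "w \<notin> spec_op p ` set (filter mem_access (LT p))"
    proof
      assume "w \<in> spec_op p ` set (filter mem_access (LT p))"
      then obtain x where x: "x \<in> set (LT p)" "mem_access x" "spec_op p x = w"
        by auto
      note pending = pending_writeD[OF 2]
      show False
        using x(1,2)
      proof (cases rule: mem_access_cases)
        case (read i a b)
        then have "w = (p, i)"
          using x(3) by simp
        then show False
          using pending read by (auto simp: in_swrites_iff)
      next
        case (applied w')
        then show False
          using pending x in_order_del by auto
      qed
    qed
    with 2 show ?thesis
      using views unfolding spec_order_def by simp
  qed
qed

lemma set_spec_order: "set (spec_order p) = sops_of C p \<union> swrites C"
proof (intro set_eqI iffI)
  fix y
  assume "y \<in> set (spec_order p)"
  then consider x where "x \<in> set (LT p)" "mem_access x" "y = spec_op p x" | "pending_write p = [y]"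
    unfolding spec_order_def using pending_write_cases[of p] by auto
  then show "y \<in> sops_of C p \<union> swrites C"
  proof cases
    case 1
    then show ?thesis
      by (cases rule: mem_access_cases[OF 1(1,2)]) (auto simp: sops_of_def)
  qed (use pending_writeD in blast)
next
  fix y
  assume y: "y \<in> sops_of C p \<union> swrites C"
  show "y \<in> set (spec_order p)"
  proof (cases "y \<in> swrites C")
    case True
    show ?thesis
    proof (cases "Suc (del_idx p y) < length (D p)")
      case applied: True
      then have "(p, DelT, Suc (del_idx p y)) \<in> set (filter mem_access (LT p))"
          "spec_op p (p, DelT, Suc (del_idx p y)) = y"
        using spec_op_applied[OF \<open>y \<in> swrites C\<close> applied] by simp_all
      then have "y \<in> spec_op p ` set (filter mem_access (LT p))"
        by (metis image_eqI)
      then show ?thesis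
        unfolding spec_order_def by simp
    next
      case False
      then have "pending_write p = [y]"
        using pending_writeI[OF True] del_idx_deliver[OF True, of p] by simp
      then show ?thesis
        unfolding spec_order_def by simp
    qed
  next
    case False
    then obtain i a b where "y = (p, i)" "i < length (C p)" "C p ! i = SRead a b"
      using y by (cases "C p ! snd y") (auto simp: sops_of_def in_swrites_iff)
    then show ?thesis
      using spec_op_read unfolding spec_order_def by force
  qed
qed

lemma spec_order_before:
  "x \<in> set (LT p) \<Longrightarrow> y \<in> set (LT p) \<Longrightarrow> mem_access x \<Longrightarrow> mem_access y \<Longrightarrow> before (LT p) x y \<Longrightarrow>
    before (spec_order p) (spec_op p x) (spec_op p y)"
proof -
  assume "x \<in> set (LT p)" "y \<in> set (LT p)" "mem_access x" "mem_access y" "before (LT p) x y"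
  then have "before (map (spec_op p) (filter mem_access (LT p))) (spec_op p x) (spec_op p y)"
    using before_map_iff[OF spec_op_inj] by (simp add: before_filter_iff)
  then show ?thesis
    unfolding spec_order_def by (rule before_append_left)
qed

lemma spec_order_before_pending:
  "x \<in> set (LT p) \<Longrightarrow> mem_access x \<Longrightarrow> pending_write p = [w] \<Longrightarrow> before (spec_order p) (spec_op p x) w"
  unfolding spec_order_def by (auto intro: before_snoc_last)

lemma spec_order_writes_before:
  assumes w1: "w1 \<in> swrites C" and w2: "w2 \<in> swrites C" and lt: "del_idx p w1 < del_idx p w2"
  shows "before (spec_order p) w1 w2"
proof -
  have "del_idx p w2 < length (D p)"
    using del_idx_deliver[OF w2] by simp
  with lt have applied1: "Suc (del_idx p w1) < length (D p)"
    by simp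
  note x1 = spec_op_applied[OF w1 applied1]
  show ?thesis
  proof (cases "Suc (del_idx p w2) < length (D p)")
    case True
    note x2 = spec_op_applied[OF w2 True]
    have "before (LT p) (p, DelT, Suc (del_idx p w1)) (p, DelT, Suc (del_idx p w2))"
      using order_thread_before x1 x2 lt by simp
    then show ?thesis
      using spec_order_before x1 x2 by metis
  next
    case False
    then have "pending_write p = [w2]"
      using pending_writeI[OF w2] \<open>del_idx p w2 < length (D p)\<close> by simp
    then show ?thesis
      using spec_order_before_pending x1 by metis
  qed
qed

lemma spec_order_writes_before_iff:
  assumes w1: "w1 \<in> swrites C" and w2: "w2 \<in> swrites C"
  shows "before (spec_order p) w1 w2 \<longleftrightarrow> del_idx p w1 < del_idx p w2"
proof
  assume before: "before (spec_order p) w1 w2"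
  show "del_idx p w1 < del_idx p w2"
  proof (rule linorder_cases[of "del_idx p w1" "del_idx p w2"])
    assume "del_idx p w1 = del_idx p w2"
    then have "w1 = w2"
      using del_idx_deliver[OF w1, of p] del_idx_deliver[OF w2, of p] upd_of_inj[OF w1 w2] by simp
    then show ?thesis
      using before before_irrefl[OF distinct_spec_order] by blast
  next
    assume "del_idx p w2 < del_idx p w1"
    then show ?thesis
      using before spec_order_writes_before[OF w2 w1] before_asym[OF distinct_spec_order] by blast
  qed
qed (rule spec_order_writes_before[OF w1 w2])

text \<open>POB delivers the updates of a process in the order in which they were broadcast.\<close>

lemma spec_order_write_write:
  assumes a: "(q, i) \<in> swrites C" and b: "(q, j) \<in> swrites C" and "i < j"
  shows "before (spec_order p) (q, i) (q, j)"
proof -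
  note bcast_a = bcast_of_write[OF a] and bcast_b = bcast_of_write[OF b]
  note del_a = del_idx_deliver[OF a, of p] and del_b = del_idx_deliver[OF b, of p]
  have "tprog (q, MainT, \<rho> q i) (q, MainT, \<rho> q j)"
    using main_layout_mono[OF layout \<open>i < j\<close>] b by (simp add: tprog_def in_swrites_iff)
  then have "delOrder M D (p, DelT, del_idx p (q, i)) (p, DelT, del_idx p (q, j))"
    unfolding delOrder_def using bcast_a bcast_b del_a del_b all_tops_main by fastforce
  moreover have in_order: "(p, DelT, del_idx p (q, i)) \<in> set (LT p)" "(p, DelT, del_idx p (q, j)) \<in> set (LT p)"
    using del_a del_b in_order_del by auto
  ultimately have "before (LT p) (p, DelT, del_idx p (q, i)) (p, DelT, del_idx p (q, j))"
    using order_respects by blast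
  then show ?thesis
    using spec_order_writes_before_iff[OF a b] order_thread_before_iff[OF in_order] by simp
qed

lemma spec_order_write_read:
  assumes w: "(p, i) \<in> swrites C" and "i < j" "j < length (C p)" and r: "C p ! j = SRead x v"
  shows "before (spec_order p) (p, i) (p, j)"
proof -
  have applied: "Suc (del_idx p (p, i)) < length (D p)"
      "before (LT p) (p, DelT, Suc (del_idx p (p, i))) (p, MainT, \<rho> p j)"
    using own_write_applied_before_read[OF \<open>i < j\<close> \<open>j < length (C p)\<close>] w r by (auto simp: in_swrites_iff)
  then show ?thesis
    using spec_order_before spec_op_applied[OF w] spec_op_read[OF \<open>j < length (C p)\<close> r] by metis
qed

lemma spec_order_read_write:
  assumes r: "C p ! i = SRead x v" and "i < j" and w: "(p, j) \<in> swrites C"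
  shows "before (spec_order p) (p, i) (p, j)"
proof -
  have j: "j < length (C p)"
    using w by (simp add: in_swrites_iff)
  with \<open>i < j\<close> have i: "i < length (C p)"
    by simp
  note read = spec_op_read[OF i r] and bcast = bcast_of_write[OF w] and deliver = del_idx_deliver[OF w, of p]
  have in_order: "(p, MainT, \<rho> p j) \<in> set (LT p)" "(p, DelT, del_idx p (p, j)) \<in> set (LT p)"
    using bcast deliver in_order_main in_order_del by auto
  have "before (LT p) (p, MainT, \<rho> p i) (p, MainT, \<rho> p j)"
    using order_thread_before[OF conjunct1[OF read] in_order(1)] main_layout_mono[OF layout \<open>i < j\<close> j] by simp
  moreover have "before (LT p) (p, MainT, \<rho> p j) (p, DelT, del_idx p (p, j))"
    using order_bcast_before_deliver[OF in_order] bcast deliver by simp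
  ultimately have read_deliver: "before (LT p) (p, MainT, \<rho> p i) (p, DelT, del_idx p (p, j))"
    using before_trans[OF order_distinct] by blast
  show ?thesis
  proof (cases "Suc (del_idx p (p, j)) < length (D p)")
    case True
    note applied = spec_op_applied[OF w True]
    have "before (LT p) (p, DelT, del_idx p (p, j)) (p, DelT, Suc (del_idx p (p, j)))"
      using order_thread_before[OF in_order(2)] applied by simp
    then have "before (LT p) (p, MainT, \<rho> p i) (p, DelT, Suc (del_idx p (p, j)))"
      using read_deliver before_trans[OF order_distinct] by blast
    then have "before (spec_order p) (spec_op p (p, MainT, \<rho> p i)) (spec_op p (p, DelT, Suc (del_idx p (p, j))))"
      using read applied by (intro spec_order_before) simp_all
    then show ?thesis
      using read applied by simp
  next
    case False
    then have "pending_write p = [(p, j)]"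
      using pending_writeI[OF w] deliver by simp
    then have "before (spec_order p) (spec_op p (p, MainT, \<rho> p i)) (p, j)"
      using read by (intro spec_order_before_pending) simp_all
    then show ?thesis
      using read by simp
  qed
qed

lemma spec_order_read_read:
  assumes "i < j" "j < length (C p)" "C p ! i = SRead x v" "C p ! j = SRead x' v'"
  shows "before (spec_order p) (p, i) (p, j)"
proof -
  have i: "i < length (C p)"
    using assms(1,2) by simp
  note read_i = spec_op_read[OF i assms(3)] and read_j = spec_op_read[OF assms(2,4)]
  have "before (LT p) (p, MainT, \<rho> p i) (p, MainT, \<rho> p j)"
    using order_thread_before read_i read_j main_layout_mono[OF layout assms(1,2)] by simp
  then have "before (spec_order p) (spec_op p (p, MainT, \<rho> p i)) (spec_op p (p, MainT, \<rho> p j))"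
    using read_i read_j by (intro spec_order_before) simp_all
  then show ?thesis
    using read_i read_j by simp
qed

lemma spec_order_prog:
  assumes "a \<in> set (spec_order p)" "b \<in> set (spec_order p)" "sprog a b"
  shows "before (spec_order p) a b"
proof -
  obtain q i j where ab: "a = (q, i)" "b = (q, j)" "i < j"
    using assms(3) unfolding sprog_def by (cases a, cases b) auto
  have read: "q = p \<and> k < length (C p) \<and> (\<exists>x v. C p ! k = SRead x v)"
    if "(q, k) \<in> set (spec_order p)" "(q, k) \<notin> swrites C" for k
    using that unfolding set_spec_order by (cases "C p ! k") (auto simp: sops_of_def in_swrites_iff)
  show ?thesis
  proof (cases "a \<in> swrites C"; cases "b \<in> swrites C")
    assume "a \<in> swrites C" "b \<in> swrites C"
    then show ?thesis
      using spec_order_write_write ab by simp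
  next
    assume "a \<in> swrites C" "b \<notin> swrites C"
    then show ?thesis
      using read[of j] spec_order_write_read assms(2) ab by auto
  next
    assume "a \<notin> swrites C" "b \<in> swrites C"
    then show ?thesis
      using read[of i] spec_order_read_write assms(1) ab by auto
  next
    assume "a \<notin> swrites C" "b \<notin> swrites C"
    then show ?thesis
      using read[of i] read[of j] spec_order_read_read assms(1,2) ab by auto
  qed
qed

lemma as_sops_top_at:
  assumes "x \<in> set (LT p)"
  shows "(if mem_access x then [sop_at C (spec_op p x)] else []) = as_sops (top_at M D x)"
proof (cases "mem_access x")
  case True
  with assms show ?thesis
  proof (cases rule: mem_access_cases)
    case (read i a b)
    then show ?thesis
      using True main_layout_read[OF layout] by (simp add: sop_at_def)
  next
    case (applied w)
    then obtain s n x' v' where "upd_of w = Upd s n x' v'" "D p ! Suc (del_idx p w) = TWriteMem x' v'"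
      using deliver_D del_idx_deliver in_order_del assms by (metis top_at_del)
    then show ?thesis
      using True applied upd_of_sop by simp
  qed
next
  case False
  then show ?thesis
    by (cases "top_at M D x") (simp_all add: mem_access_def)
qed

lemma valid_spec_order: "valid_seq init (map (sop_at C) (spec_order p))"
proof -
  have "map (sop_at C) (map (spec_op p) (filter mem_access (LT p))) =
      concat (map (\<lambda>x. if mem_access x then [sop_at C (spec_op p x)] else []) (LT p))"
    by (subst map_map) (simp only: map_filter_concat comp_def)
  also have "\<dots> = concat (map as_sops (top_seq p))"
    by (simp add: as_sops_top_at cong: map_cong)
  finally have replica: "map (sop_at C) (map (spec_op p) (filter mem_access (LT p))) = concat (map as_sops (top_seq p))" .
  have "valid_seq init (concat (map as_sops (top_seq p)))"
    using order_valid[of p] unfolding tvalid_def by (intro valid_seq_as_sops) blast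
  moreover have "\<forall>op\<in>set (map (sop_at C) (pending_write p)). is_swrite op"
    using pending_write_cases[of p] pending_writeD by (force simp: in_swrites_iff sop_at_def)
  ultimately show ?thesis
    unfolding spec_order_def map_append replica by (rule valid_seq_append_writes)
qed

lemma del_before_iff_del_idx:
  assumes a: "a \<in> swrites C" and b: "b \<in> swrites C" and "label_of a = Some l" "label_of b = Some l"
  shows "del_before M D (LT p) (upd_of a) (upd_of b) l \<longleftrightarrow> del_idx p a < del_idx p b"
proof
  assume "del_before M D (LT p) (upd_of a) (upd_of b) l"
  then obtain x y where xy: "before (LT p) x y" "top_at M D x = TDeliver (upd_of a) (Some l)"
      "top_at M D y = TDeliver (upd_of b) (Some l)"
    unfolding del_before_def by blast
  have in_order: "x \<in> set (LT p)" "y \<in> set (LT p)"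
    using before_in_set[OF xy(1)] by auto
  obtain d1 d2 where x: "x = (p, DelT, d1)" "d1 < length (D p)" and y: "y = (p, DelT, d2)" "d2 < length (D p)"
    using in_order_not_main_op[OF in_order(1)] in_order_not_main_op[OF in_order(2)] xy(2,3)
    by (metis main_op_def top.simps(72))
  have "d1 = del_idx p a" "d2 = del_idx p b"
    using del_idx_unique[OF a x(2)] del_idx_unique[OF b y(2)] xy x y by simp_all
  then show "del_idx p a < del_idx p b"
    using order_thread_before_iff[of p DelT d1 d2] in_order x y xy by simp
next
  assume lt: "del_idx p a < del_idx p b"
  note del_a = del_idx_deliver[OF a, of p] and del_b = del_idx_deliver[OF b, of p]
  have "before (LT p) (p, DelT, del_idx p a) (p, DelT, del_idx p b)"
    using order_thread_before[OF _ _ lt] del_a del_b in_order_del by auto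
  then show "del_before M D (LT p) (upd_of a) (upd_of b) l"
    unfolding del_before_def using del_a del_b assms(3,4)
    by (intro exI[of _ "(p, DelT, del_idx p a)"] exI[of _ "(p, DelT, del_idx p b)"]) simp
qed

lemma PC_spec_order:
  assumes disjoint: "\<forall>i j. i < length Ks \<longrightarrow> j < length Ks \<longrightarrow> i \<noteq> j \<longrightarrow> Ks ! i \<inter> Ks ! j = {}"
  shows "PC Ks init C"
  unfolding PC_def
proof (intro exI[of _ spec_order] conjI allI impI ballI)
  fix p q i a b
  assume i: "i < length Ks" and a: "a \<in> swrites_in C (Ks ! i)" and b: "b \<in> swrites_in C (Ks ! i)"
  have w: "a \<in> swrites C" "b \<in> swrites C"
    using a b by (auto simp: swrites_in_def)
  have l: "label_of a = Some (Suc i)" "label_of b = Some (Suc i)"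
    using a b label_eq_Some[OF disjoint i] by (simp_all add: swrites_in_def label_of_def)
  have "before (spec_order p) a b \<longleftrightarrow> del_before M D (LT p) (upd_of a) (upd_of b) (Suc i)"
    using spec_order_writes_before_iff[OF w] del_before_iff_del_idx[OF w l] by simp
  also have "\<dots> \<longleftrightarrow> del_before M D (LT q) (upd_of a) (upd_of b) (Suc i)"
    using order_agree[of "Suc i"] i by simp
  also have "\<dots> \<longleftrightarrow> before (spec_order q) a b"
    using spec_order_writes_before_iff[OF w] del_before_iff_del_idx[OF w l] by simp
  finally show "before (spec_order p) a b \<longleftrightarrow> before (spec_order q) a b" .
qed (use distinct_spec_order set_spec_order valid_spec_order spec_order_prog in auto)

end

theorem mainTheorem1:
  fixes tr :: transformation
    and V :: "'var set"
    and Ks :: "'var set list"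
    and init :: "'var \<Rightarrow> 'val"
    and P :: "'p::finite \<Rightarrow> ('var,'val) inv list"
    and M D :: "'p \<Rightarrow> ('p,'var,'val) top list"
    and C :: "'p \<Rightarrow> ('var,'val) sop list"
  assumes admissible: "\<forall>p. \<forall>i \<in> set (P p). inv_var i \<in> V"
    and partition: "partition_of_subset Ks V"
    and main_threads: "\<forall>p. main_exec tr Ks p 0 (P p) (M p) (C p)"
    and delivery_threads: "\<forall>p. del_trace p (D p)"
    and pob: "POB (length Ks) init M D"
  shows "PC Ks init C"
proof -
  have "\<forall>p. \<exists>\<rho>. main_layout tr Ks p 0 (M p) (C p) \<rho>"
    using main_exec_layout[OF main_threads[rule_format]] by blast
  then obtain \<rho> where \<rho>: "\<And>p. main_layout tr Ks p 0 (M p) (C p) (\<rho> p)"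
    by metis
  obtain LT :: "'p \<Rightarrow> ('p \<times> thr \<times> nat) list" where LT:
      "\<forall>p. distinct (LT p) \<and> set (LT p) = tops_of M D p \<and> tvalid init (map (top_at M D) (LT p)) \<and>
         (\<forall>a \<in> set (LT p). \<forall>b \<in> set (LT p). tprog a b \<or> delOrder M D a b \<longrightarrow> before (LT p) a b)"
      "\<forall>p q. \<forall>l \<in> {1..length Ks}. \<forall>u1 u2. del_before M D (LT p) u1 u2 l \<longleftrightarrow> del_before M D (LT q) u1 u2 l"
      "\<forall>p u l. (\<exists>a \<in> all_tops M D. top_at M D a = TBcast u l) \<longleftrightarrow> (\<exists>a \<in> tops_of M D p. top_at M D a = TDeliver u l)"
    using pob unfolding POB_def by blast
  interpret pob_run tr Ks init M D C \<rho> LT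
    by unfold_locales (use \<rho> LT delivery_threads in blast)+
  show ?thesis
    using partition unfolding partition_of_subset_def by (intro PC_spec_order) blast
qed

end
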